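(* Let $n$ be a positive integer and $k$ an even integer with $n/2+1\le k\le n-1$, and let $x\mapsto p_x\in\mathbb{R}^n$ be given by $p_x(i)=(-1)^{x_i}/\sqrt{n}$ for $i\in[n]$. Then for any graph $G$ with $H_{n,k}\subsetneq G\subseteq H'_{n,k}$ we have $\chi_v(G)=\chi_v(H_{n,k})$, $G$ is uniquely vector colorable, its unique optimal vector coloring is $x\mapsto p_x$, and this vector coloring is not strict for $G$. In particular $\chi_v(G)<\chi_{sv}(G)$.
   Context: $H_{n,k}$ is the graph on the even-weight elements of $\mathbb{Z}_2^n$ with $x\sim y$ iff the Hamming distance $d(x,y)=k$; $H'_{n,k}$ is the graph on the same vertices with $x\sim y$ iff $d(x,y)\ge k$; $G$ has this same vertex set and its edge set strictly contains that of $H_{n,k}$ and is contained in that of $H'_{n,k}$. A vector $t$-coloring ($t\ge2$) assigns unit vectors $p_i$ to vertices with $\langle p_i,p_j\rangle\le -1/(t-1)$ on edges; it is strict if equality holds on every edge. $\chi_v$ (resp. $\chi_{sv}$) is the least $t\ge2$ admitting a (resp. strict) vector $t$-coloring; optimal means $t=\chi_v$. A graph is uniquely vector colorable if any two optimal vector colorings have equal Gram matrices; "unique optimal vector coloring is $x\mapsto p_x$" means every optimal vector coloring has the same Gram matrix as $x\mapsto p_x$. *)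

theory Defs
  imports Complex_Main
begin

text \<open>Vectors of a vector coloring live in R^d for some finite d, represented as functions
  nat => real vanishing outside {..<d}.\<close>

definition ip :: "nat \<Rightarrow> (nat \<Rightarrow> real) \<Rightarrow> (nat \<Rightarrow> real) \<Rightarrow> real" where
  "ip d u v = (\<Sum>i<d. u i * v i)"

definition unit_vec_on :: "nat \<Rightarrow> (nat \<Rightarrow> real) \<Rightarrow> bool" where
  "unit_vec_on d u \<longleftrightarrow> (\<forall>i\<ge>d. u i = 0) \<and> ip d u u = 1"

definition vector_coloring ::
  "'v set \<Rightarrow> ('v \<times> 'v) set \<Rightarrow> real \<Rightarrow> nat \<Rightarrow> ('v \<Rightarrow> nat \<Rightarrow> real) \<Rightarrow> bool" where
  "vector_coloring V E t d p \<longleftrightarrow> t \<ge> 2 \<and> (\<forall>x\<in>V. unit_vec_on d (p x)) \<and>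
     (\<forall>(x,y)\<in>E. ip d (p x) (p y) \<le> - 1 / (t - 1))"

definition strict_vector_coloring ::
  "'v set \<Rightarrow> ('v \<times> 'v) set \<Rightarrow> real \<Rightarrow> nat \<Rightarrow> ('v \<Rightarrow> nat \<Rightarrow> real) \<Rightarrow> bool" where
  "strict_vector_coloring V E t d p \<longleftrightarrow> t \<ge> 2 \<and> (\<forall>x\<in>V. unit_vec_on d (p x)) \<and>
     (\<forall>(x,y)\<in>E. ip d (p x) (p y) = - 1 / (t - 1))"

definition chi_v :: "'v set \<Rightarrow> ('v \<times> 'v) set \<Rightarrow> real" where
  "chi_v V E = Inf {t. \<exists>d p. vector_coloring V E t d p}"

definition chi_sv :: "'v set \<Rightarrow> ('v \<times> 'v) set \<Rightarrow> real" where
  "chi_sv V E = Inf {t. \<exists>d p. strict_vector_coloring V E t d p}"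

definition optimal_vector_coloring ::
  "'v set \<Rightarrow> ('v \<times> 'v) set \<Rightarrow> nat \<Rightarrow> ('v \<Rightarrow> nat \<Rightarrow> real) \<Rightarrow> bool" where
  "optimal_vector_coloring V E d p \<longleftrightarrow> vector_coloring V E (chi_v V E) d p"

definition same_gram ::
  "'v set \<Rightarrow> nat \<Rightarrow> ('v \<Rightarrow> nat \<Rightarrow> real) \<Rightarrow> nat \<Rightarrow> ('v \<Rightarrow> nat \<Rightarrow> real) \<Rightarrow> bool" where
  "same_gram V d p d' q \<longleftrightarrow> (\<forall>x\<in>V. \<forall>y\<in>V. ip d (p x) (p y) = ip d' (q x) (q y))"

definition uniquely_vector_colorable :: "'v set \<Rightarrow> ('v \<times> 'v) set \<Rightarrow> bool" where
  "uniquely_vector_colorable V E \<longleftrightarrow>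
     (\<forall>d p d' q. optimal_vector_coloring V E d p \<and> optimal_vector_coloring V E d' q
        \<longrightarrow> same_gram V d p d' q)"

text \<open>Elements of Z_2^n are represented by their supports, subsets of {..<n}.\<close>

definition even_cube :: "nat \<Rightarrow> nat set set" where
  "even_cube n = {x. x \<subseteq> {..<n} \<and> even (card x)}"

definition hamming :: "nat set \<Rightarrow> nat set \<Rightarrow> nat" where
  "hamming x y = card ((x - y) \<union> (y - x))"

definition H_edges :: "nat \<Rightarrow> nat \<Rightarrow> (nat set \<times> nat set) set" where
  "H_edges n k = {(x,y). x \<in> even_cube n \<and> y \<in> even_cube n \<and> hamming x y = k}"

definition H'_edges :: "nat \<Rightarrow> nat \<Rightarrow> (nat set \<times> nat set) set" where
  "H'_edges n k = {(x,y). x \<in> even_cube n \<and> y \<in> even_cube n \<and> hamming x y \<ge> k}"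

definition cube_vec :: "nat \<Rightarrow> nat set \<Rightarrow> nat \<Rightarrow> real" where
  "cube_vec n x i = (if i < n then (if i \<in> x then -1 else 1) / sqrt (real n) else 0)"

end

theory Submission
  imports Defs
begin

(*
  A vector colouring p of a graph on the even cube gives the kernel G x y = <p x, p y>, which is
  positive semidefinite with unit diagonal. Expanding G in Walsh characters, the sum of G over the
  edges of H_{n,k} is a combination of the Krawtchouk values K_k(|S|) with the nonnegative diagonal
  Walsh coefficients of G as weights (Delsarte's argument). For even k with n + 2 <= 2 k < 2 n the
  minimum of K_k on {0..n} is K_k(1) = K_k(n - 1) and is attained nowhere else; this gives
  chi_v >= 2 k / (2 k - n), with equality for the cube vectors. In the equality case only the Walsh
  coefficients at |S| = 1 or n - 1 survive and every edge of H_{n,k} is tight, which pins G down to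
  the Gram matrix of the cube vectors. Edges of G outside H_{n,k} join vertices at distance > k, so
  the cube colouring is not strict, and by compactness of Gram matrices no sequence of strict
  colourings can approach chi_v either.
  The minimum of K_k is found by bounding |K_k(s)| for 0 < s < n by induction on n, removing one
  coordinate inside and one outside the support at a time.
*)

section \<open>Walsh characters and Krawtchouk sums\<close>

definition walsh :: "'a set \<Rightarrow> 'a set \<Rightarrow> real" where
  "walsh S x = (-1) ^ card (S \<inter> x)"

(* krawtchouk U S k is the Krawtchouk polynomial K_k of length card U evaluated at card (S \<inter> U). *)
definition krawtchouk :: "'a set \<Rightarrow> 'a set \<Rightarrow> nat \<Rightarrow> real" where
  "krawtchouk U S k = (\<Sum>T \<in> {T. T \<subseteq> U \<and> card T = k}. walsh S T)"

lemma walsh_commute: "walsh S x = walsh x S"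
  unfolding walsh_def by (simp add: Int_commute)

lemma walsh_mult_self: "walsh S x * walsh S x = 1"
  unfolding walsh_def by (simp flip: power_mult_distrib)

lemma walsh_insert:
  assumes "finite x" "a \<notin> x"
  shows "walsh S (insert a x) = (if a \<in> S then -1 else 1) * walsh S x"
proof -
  have "S \<inter> insert a x = (if a \<in> S then insert a (S \<inter> x) else S \<inter> x)" by auto
  then show ?thesis unfolding walsh_def using assms by simp
qed

lemma walsh_singleton: "walsh {j} x = (if j \<in> x then -1 else 1)"
  unfolding walsh_def by auto

lemma card_sym_diff:
  assumes "finite A" "finite B"
  shows "card (sym_diff A B) + 2 * card (A \<inter> B) = card A + card B"
proof -
  have "A \<union> B = sym_diff A B \<union> (A \<inter> B)" "sym_diff A B \<inter> (A \<inter> B) = {}" by auto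
  then have "card (A \<union> B) = card (sym_diff A B) + card (A \<inter> B)"
    using assms by (metis card_Un_disjoint finite_Diff finite_Int finite_UnI)
  then show ?thesis using card_Un_Int[OF assms] by simp
qed

lemma walsh_sym_diff:
  assumes "finite x" "finite y"
  shows "walsh S (sym_diff x y) = walsh S x * walsh S y"
proof -
  have "S \<inter> sym_diff x y = sym_diff (S \<inter> x) (S \<inter> y)" by auto
  then have "card (S \<inter> x) + card (S \<inter> y) = card (S \<inter> sym_diff x y) + 2 * card (S \<inter> x \<inter> y)"
    using card_sym_diff[of "S \<inter> x" "S \<inter> y"] assms by (simp add: Int_assoc Int_left_commute)
  then have "(-1::real) ^ (card (S \<inter> x) + card (S \<inter> y)) = (-1) ^ card (S \<inter> sym_diff x y)"
    by (simp add: power_add)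
  then show ?thesis unfolding walsh_def by (simp add: power_add)
qed

lemma subsets_card_Suc_insert:
  assumes "finite U" "a \<notin> U"
  shows "{T. T \<subseteq> insert a U \<and> card T = Suc k} =
     {T. T \<subseteq> U \<and> card T = Suc k} \<union> insert a ` {T. T \<subseteq> U \<and> card T = k}"
proof (intro equalityI subsetI)
  fix T assume T: "T \<in> {T. T \<subseteq> insert a U \<and> card T = Suc k}"
  show "T \<in> {T. T \<subseteq> U \<and> card T = Suc k} \<union> insert a ` {T. T \<subseteq> U \<and> card T = k}"
  proof (cases "a \<in> T")
    case True
    then have "T = insert a (T - {a})" "card (T - {a}) = k" "T - {a} \<subseteq> U"
      using T by auto
    then show ?thesis by blast
  qed (use T in auto)
next
  fix T assume "T \<in> {T. T \<subseteq> U \<and> card T = Suc k} \<union> insert a ` {T. T \<subseteq> U \<and> card T = k}"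
  then show "T \<in> {T. T \<subseteq> insert a U \<and> card T = Suc k}"
  proof
    assume "T \<in> insert a ` {T. T \<subseteq> U \<and> card T = k}"
    then obtain T' where "T = insert a T'" "T' \<subseteq> U" "card T' = k" by auto
    moreover have "finite T'" "a \<notin> T'" using calculation assms finite_subset by auto
    ultimately show ?thesis by auto
  qed auto
qed

lemma krawtchouk_insert:
  assumes "finite U" "a \<notin> U"
  shows "krawtchouk (insert a U) S (Suc k) =
    krawtchouk U S (Suc k) + (if a \<in> S then -1 else 1) * krawtchouk U S k"
proof -
  let ?T = "\<lambda>j. {T. T \<subseteq> U \<and> card T = j}"
  have inj: "inj_on (insert a) (?T k)"
    using assms(2) unfolding inj_on_def by (metis insert_ident subset_iff mem_Collect_eq)
  have "krawtchouk (insert a U) S (Suc k) = krawtchouk U S (Suc k) + (\<Sum>T\<in>insert a ` ?T k. walsh S T)"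
    unfolding krawtchouk_def subsets_card_Suc_insert[OF assms]
    using assms by (intro sum.union_disjoint) auto
  also have "(\<Sum>T\<in>insert a ` ?T k. walsh S T) = (\<Sum>T\<in>?T k. walsh S (insert a T))"
    by (simp add: sum.reindex[OF inj])
  also have "\<dots> = (\<Sum>T\<in>?T k. (if a \<in> S then -1 else 1) * walsh S T)"
    using assms by (intro sum.cong refl walsh_insert) (auto dest: finite_subset)
  finally show ?thesis unfolding krawtchouk_def by (simp add: sum_distrib_left)
qed

lemma krawtchouk_insert2:
  assumes "finite U" "a \<in> S" "b \<notin> S" "a \<notin> U" "b \<notin> U" "2 \<le> k"
  shows "krawtchouk (insert a (insert b U)) S k = krawtchouk U S k - krawtchouk U S (k - 2)"
proof -
  obtain j where k: "k = Suc (Suc j)" using assms(6) by (metis add_2_eq_Suc le_Suc_ex)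
  have "a \<notin> insert b U" using assms by auto
  then show ?thesis unfolding k using assms
    by (simp add: krawtchouk_insert)
qed

lemma krawtchouk_0:
  assumes "finite U" shows "krawtchouk U S 0 = 1"
proof -
  have "{T. T \<subseteq> U \<and> card T = 0} = {{}}" using assms by (auto dest: rev_finite_subset)
  then show ?thesis unfolding krawtchouk_def by (simp add: walsh_def)
qed

lemma krawtchouk_eq_0: "finite U \<Longrightarrow> card U < k \<Longrightarrow> krawtchouk U S k = 0"
  unfolding krawtchouk_def by (auto dest: card_mono intro!: sum.neutral)

lemma krawtchouk_disjoint:
  assumes "finite U" "S \<inter> U = {}"
  shows "krawtchouk U S k = real (card U choose k)"
proof -
  have "S \<inter> T = {}" if "T \<subseteq> U" for T using assms(2) that by auto
  then have "krawtchouk U S k = (\<Sum>T \<in> {T. T \<subseteq> U \<and> card T = k}. 1)"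
    unfolding krawtchouk_def walsh_def by (intro sum.cong refl) auto
  then show ?thesis using n_subsets[OF assms(1)] by simp
qed

lemma krawtchouk_complement:
  assumes "finite U"
  shows "krawtchouk U S k = (-1) ^ k * krawtchouk U (U - S) k"
  unfolding krawtchouk_def sum_distrib_left
proof (rule sum.cong[OF refl])
  fix T assume T: "T \<in> {T. T \<subseteq> U \<and> card T = k}"
  then have "card (S \<inter> T) + card ((U - S) \<inter> T) = k"
    using assms by (subst card_Un_disjoint[symmetric]) (auto dest: finite_subset intro: arg_cong[where f = card])
  then have "(-1) ^ k * walsh (U - S) T = walsh S T * (walsh (U - S) T * walsh (U - S) T)"
    unfolding walsh_def by (metis power_add mult.assoc)
  then show "walsh S T = (-1) ^ k * walsh (U - S) T" by (simp add: walsh_mult_self)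
qed

lemma krawtchouk_complement_size:
  assumes "finite U" "k \<le> card U"
  shows "krawtchouk U S (card U - k) = walsh S U * krawtchouk U S k"
proof -
  have bij: "bij_betw (\<lambda>T. U - T) {T. T \<subseteq> U \<and> card T = k} {T. T \<subseteq> U \<and> card T = card U - k}"
    by (rule bij_betw_byWitness[where f' = "\<lambda>T. U - T"])
      (use assms in \<open>auto simp: card_Diff_subset finite_subset\<close>)
  have "krawtchouk U S (card U - k) = (\<Sum>T \<in> {T. T \<subseteq> U \<and> card T = k}. walsh S (sym_diff U T))"
    unfolding krawtchouk_def sum.reindex_bij_betw[OF bij, symmetric]
    by (intro sum.cong refl arg_cong[where f = "walsh S"]) auto
  also have "\<dots> = (\<Sum>T \<in> {T. T \<subseteq> U \<and> card T = k}. walsh S U * walsh S T)"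
    using assms(1) by (intro sum.cong refl walsh_sym_diff) (auto dest: rev_finite_subset)
  finally show ?thesis unfolding krawtchouk_def by (simp add: sum_distrib_left)
qed

lemma krawtchouk_singleton:
  assumes "finite U" "S \<inter> U = {a}"
  shows "krawtchouk U S k = real (card U choose k) * (real (card U) - 2 * real k) / real (card U)"
proof -
  have "a \<in> U" "a \<in> S" using assms(2) by auto
  define U0 where "U0 = U - {a}"
  have U: "U = insert a U0" "a \<notin> U0" "finite U0" "S \<inter> U0 = {}" "card U = Suc (card U0)"
    using assms card_Suc_Diff1[OF assms(1) \<open>a \<in> U\<close>] unfolding U0_def by auto
  show ?thesis
  proof (cases k)
    case 0
    then show ?thesis using krawtchouk_0[OF assms(1)] U by simp
  next
    case (Suc j)
    have kw: "krawtchouk U S k = real (card U0 choose k) - real (card U0 choose j)"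
      unfolding Suc U(1) using krawtchouk_insert[OF U(3) U(2)] \<open>a \<in> S\<close> krawtchouk_disjoint[OF U(3,4)]
      by simp
    have "(card U - k) * (card U choose k) = card U * (card U0 choose k)"
      using binomial_absorb_comp[of "card U" k] U by simp
    then have rest: "real (card U choose k) * (real (card U) - real k) = real (card U) * real (card U0 choose k)"
      by (cases "k \<le> card U") (auto simp: binomial_eq_0 mult.commute of_nat_diff dest!: arg_cong[where f = real])
    have "k * (card U choose k) = card U * (card U0 choose j)"
      using times_binomial_minus1_eq[of k "card U"] Suc U by simp
    then have taken: "real (card U choose k) * real k = real (card U) * real (card U0 choose j)"
      by (metis mult.commute of_nat_mult)
    have "real (card U choose k) * (real (card U) - 2 * real k) = real (card U) * krawtchouk U S k"
      unfolding kw using rest taken by (simp add: algebra_simps)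
    then show ?thesis using U by (simp add: field_simps)
  qed
qed

section \<open>Bounding the Krawtchouk sums\<close>

(* |K_k(1)| for length n, except in the middle case 2 k = n, where K_k(1) = 0 and |K_k(2)| is used. *)
definition krawtchouk_bound :: "nat \<Rightarrow> nat \<Rightarrow> real" where
  "krawtchouk_bound n k = (if 2 * k = n then real (n choose k) / (real n - 1)
     else real (n choose k) * \<bar>2 * real k - real n\<bar> / real n)"

lemma binomial_diff2:
  assumes "2 \<le> n"
  shows "real ((n - 2) choose k) =
    real (n choose k) * (real n - real k) * (real n - real k - 1) / (real n * (real n - 1))"
proof (cases "k < n")
  case True
  have "(n - k) * (n choose k) = n * ((n - 1) choose k)" by (rule binomial_absorb_comp)
  moreover have "((n - 1) - k) * ((n - 1) choose k) = (n - 1) * ((n - 2) choose k)"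
    using binomial_absorb_comp[of "n - 1" k] by (simp add: numeral_2_eq_2)
  ultimately have "real ((n - k) * ((n - 1) - k) * (n choose k)) = real (n * (n - 1) * ((n - 2) choose k))"
    by (metis mult.assoc mult.left_commute)
  moreover have "real (n - k) = real n - real k" "real (n - 1 - k) = real n - real k - 1"
    "real (n - 1) = real n - 1" using True by (auto simp: of_nat_diff)
  ultimately show ?thesis using assms by (simp only: of_nat_mult) (simp add: field_simps)
qed (use assms in \<open>auto simp: binomial_eq_0\<close>)

lemma binomial_diff2_diff2:
  assumes "2 \<le> n" "2 \<le> k"
  shows "real ((n - 2) choose (k - 2)) = real (n choose k) * real k * (real k - 1) / (real n * (real n - 1))"
proof -
  have "k * (n choose k) = n * ((n - 1) choose (k - 1))"
    using assms by (intro times_binomial_minus1_eq) simp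
  moreover have "(k - 1) * ((n - 1) choose (k - 1)) = (n - 1) * ((n - 2) choose (k - 2))"
    using assms times_binomial_minus1_eq[of "k - 1" "n - 1"] by (simp add: numeral_2_eq_2)
  ultimately have "k * (k - 1) * (n choose k) = n * (n - 1) * ((n - 2) choose (k - 2))"
    by (metis mult.assoc mult.left_commute)
  then have "real k * (real k - 1) * real (n choose k) = real n * (real n - 1) * real ((n - 2) choose (k - 2))"
    using assms by (auto simp: of_nat_diff dest!: arg_cong[where f = real])
  then show ?thesis using assms by (simp add: field_simps)
qed

lemma krawtchouk_bound_gap_above:
  assumes "4 \<le> n" "n + 3 \<le> 2 * k"
  shows "krawtchouk_bound n k - (krawtchouk_bound (n - 2) k + krawtchouk_bound (n - 2) (k - 2)) =
    2 * real (n choose k) * (2 * real k - real n) * real k * (real n - real k) /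
      (real n * (real n - 1) * (real n - 2))"
proof -
  define N K c where "N = real n" "K = real k" "c = real (n choose k)"
  have nk: "2 * k \<noteq> n" "2 * k \<noteq> n - 2" "2 * (k - 2) \<noteq> n - 2" using assms by auto
  have N: "real (n - 2) = N - 2" "real (k - 2) = K - 2" "N \<ge> 4" "2 * K \<ge> N + 3"
    using assms unfolding N_K_c_def by (auto simp: of_nat_diff)
  have "krawtchouk_bound n k = c * (2 * K - N) / N"
    unfolding krawtchouk_bound_def if_not_P[OF nk(1)] N_K_c_def using N by simp
  moreover have "krawtchouk_bound (n - 2) k =
      c * (N - K) * (N - K - 1) / (N * (N - 1)) * (2 * K - N + 2) / (N - 2)"
    unfolding krawtchouk_bound_def if_not_P[OF nk(2)] using N binomial_diff2[of n k] assms
    by (simp add: N_K_c_def)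
  moreover have "krawtchouk_bound (n - 2) (k - 2) =
      c * K * (K - 1) / (N * (N - 1)) * (2 * K - N - 2) / (N - 2)"
    unfolding krawtchouk_bound_def if_not_P[OF nk(3)] using N binomial_diff2_diff2[of n k] assms
    by (simp add: N_K_c_def)
  moreover have "N \<noteq> 0" "N - 1 \<noteq> 0" "N - 2 \<noteq> 0" using N by auto
  ultimately show ?thesis unfolding N_K_c_def[symmetric]
    by (simp add: divide_simps del: eq_iff_diff_eq_0) algebra
qed

lemma krawtchouk_bound_gap_near:
  assumes "4 \<le> n" "2 * k = n + 2"
  shows "krawtchouk_bound n k - (krawtchouk_bound (n - 2) k + krawtchouk_bound (n - 2) (k - 2)) =
    6 * real (n choose k) * real k * (real k - 2) * (real k - 3) /
      (real n * (real n - 1) * (real n - 2) * (real n - 3))"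
proof -
  define N K c where "N = real n" "K = real k" "c = real (n choose k)"
  have nk: "2 * k \<noteq> n" "2 * k \<noteq> n - 2" "2 * (k - 2) = n - 2" using assms by auto
  have N: "real (n - 2) = N - 2" "N \<ge> 4" "N = 2 * K - 2"
    using assms unfolding N_K_c_def by (auto simp: of_nat_diff)
  have "krawtchouk_bound n k = c * (2 * K - N) / N"
    unfolding krawtchouk_bound_def if_not_P[OF nk(1)] N_K_c_def using assms by simp
  moreover have "krawtchouk_bound (n - 2) k =
      c * (N - K) * (N - K - 1) / (N * (N - 1)) * (2 * K - N + 2) / (N - 2)"
    unfolding krawtchouk_bound_def if_not_P[OF nk(2)] using N binomial_diff2[of n k] assms
    by (simp add: N_K_c_def)
  moreover have "krawtchouk_bound (n - 2) (k - 2) = c * K * (K - 1) / (N * (N - 1)) / (N - 3)"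
    unfolding krawtchouk_bound_def if_P[OF nk(3)] using N binomial_diff2_diff2[of n k] assms
    by (simp add: N_K_c_def)
  moreover have "N \<noteq> 0" "N - 1 \<noteq> 0" "N - 2 \<noteq> 0" "N - 3 \<noteq> 0" using N by auto
  ultimately show ?thesis unfolding N_K_c_def[symmetric] using N(3)
    by (simp add: divide_simps del: eq_iff_diff_eq_0) algebra
qed

lemma krawtchouk_bound_gap_middle:
  assumes "4 \<le> n" "2 * k = n \<or> 2 * k = n + 1"
  shows "krawtchouk_bound (n - 2) k + krawtchouk_bound (n - 2) (k - 2) = krawtchouk_bound n k"
proof -
  define N K c where "N = real n" "K = real k" "c = real (n choose k)"
  have nk: "2 * k \<noteq> n - 2" "2 * (k - 2) \<noteq> n - 2" "2 \<le> k" using assms by auto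
  have N: "real (n - 2) = N - 2" "real (k - 2) = K - 2" "N \<ge> 4" "N = 2 * K \<or> N = 2 * K - 1"
    using assms nk unfolding N_K_c_def by (auto simp: of_nat_diff)
  have "krawtchouk_bound (n - 2) k =
      c * (N - K) * (N - K - 1) / (N * (N - 1)) * (2 * K - N + 2) / (N - 2)"
    unfolding krawtchouk_bound_def if_not_P[OF nk(1)] using N binomial_diff2[of n k] assms
    by (auto simp: N_K_c_def)
  moreover have "krawtchouk_bound (n - 2) (k - 2) =
      c * K * (K - 1) / (N * (N - 1)) * (N + 2 - 2 * K) / (N - 2)"
    unfolding krawtchouk_bound_def if_not_P[OF nk(2)] using N binomial_diff2_diff2[of n k] assms nk
    by (auto simp: N_K_c_def)
  moreover have "krawtchouk_bound n k = (if N = 2 * K then c / (N - 1) else c * (2 * K - N) / N)"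
    unfolding krawtchouk_bound_def N_K_c_def using assms by (auto simp: of_nat_eq_iff[symmetric])
  moreover have "N \<noteq> 0" "N - 1 \<noteq> 0" "N - 2 \<noteq> 0" using N by auto
  ultimately show ?thesis unfolding N_K_c_def[symmetric] using N(4)
    by (auto simp: divide_simps simp del: eq_iff_diff_eq_0) algebra+
qed

lemma krawtchouk_bound_rec_le:
  assumes "4 \<le> n" "n \<le> 2 * k" "k \<le> n"
  shows "krawtchouk_bound (n - 2) k + krawtchouk_bound (n - 2) (k - 2) \<le> krawtchouk_bound n k"
proof -
  consider "n + 3 \<le> 2 * k" | "2 * k = n + 2" | "2 * k = n \<or> 2 * k = n + 1" using assms by linarith
  then show ?thesis
  proof cases
    case 1
    then have "0 \<le> 2 * real (n choose k) * (2 * real k - real n) * real k * (real n - real k) /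
        (real n * (real n - 1) * (real n - 2))" using assms by simp
    then show ?thesis using krawtchouk_bound_gap_above[OF assms(1) 1] by linarith
  next
    case 2
    then have "0 \<le> 6 * real (n choose k) * real k * (real k - 2) * (real k - 3) /
        (real n * (real n - 1) * (real n - 2) * (real n - 3))" using assms by simp
    then show ?thesis using krawtchouk_bound_gap_near[OF assms(1) 2] by linarith
  qed (use krawtchouk_bound_gap_middle[OF assms(1)] in auto)
qed

lemma krawtchouk_bound_rec_less:
  assumes "5 \<le> n" "n + 2 \<le> 2 * k" "k < n"
  shows "krawtchouk_bound (n - 2) k + krawtchouk_bound (n - 2) (k - 2) < krawtchouk_bound n k"
proof -
  consider "n + 3 \<le> 2 * k" | "2 * k = n + 2" using assms by linarith
  then show ?thesis
  proof cases
    case 1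
    then have "0 < 2 * real (n choose k) * (2 * real k - real n) * real k * (real n - real k) /
        (real n * (real n - 1) * (real n - 2))" using assms by simp
    then show ?thesis using krawtchouk_bound_gap_above[OF _ 1] assms by linarith
  next
    case 2
    then have "0 < 6 * real (n choose k) * real k * (real k - 2) * (real k - 3) /
        (real n * (real n - 1) * (real n - 2) * (real n - 3))" using assms by simp
    then show ?thesis using krawtchouk_bound_gap_near[OF _ 2] assms by linarith
  qed
qed

lemma krawtchouk_bound_nonneg: "2 \<le> n \<Longrightarrow> 0 \<le> krawtchouk_bound n k"
  unfolding krawtchouk_bound_def by auto

lemma krawtchouk_bound_symmetric:
  assumes "k \<le> n" shows "krawtchouk_bound n (n - k) = krawtchouk_bound n k"
  unfolding krawtchouk_bound_def binomial_symmetric[OF assms, symmetric] using assms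
  by (auto simp: of_nat_diff)

lemma abs_krawtchouk_le_bound_single:
  assumes "finite U" "card (S \<inter> U) = 1 \<or> card (U - S) = 1"
  shows "\<bar>krawtchouk U S k\<bar> \<le> krawtchouk_bound (card U) k"
proof -
  have "\<bar>krawtchouk U S k\<bar> \<le> krawtchouk_bound (card U) k" if S: "card (S \<inter> U) = 1" for S
  proof -
    obtain a where a: "S \<inter> U = {a}" using S card_1_singletonE by blast
    then have "card U \<ge> 1" using assms(1) by (metis Int_lower2 card_mono S)
    then show ?thesis unfolding krawtchouk_singleton[OF assms(1) a] krawtchouk_bound_def
      by (cases "2 * k = card U") (auto simp: abs_mult abs_minus_commute dest!: arg_cong[where f = real])
  qed
  note single = this
  show ?thesis using assms(2)
  proof
    assume "card (U - S) = 1"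
    moreover have "(U - S) \<inter> U = U - S" by auto
    ultimately show ?thesis
      using single[of "U - S"] krawtchouk_complement[OF assms(1), of S k] by (simp add: abs_mult)
  qed (rule single)
qed

lemma abs_krawtchouk_reflect:
  assumes "finite U" "k \<le> card U"
  shows "\<bar>krawtchouk U S (card U - k)\<bar> = \<bar>krawtchouk U S k\<bar>"
  using krawtchouk_complement_size[OF assms] by (simp add: abs_mult walsh_def)

lemma krawtchouk_remove_pair:
  assumes "finite U" "S \<inter> U \<noteq> {}" "U - S \<noteq> {}" "2 \<le> k"
  obtains U' where "finite U'" "card U' = card U - 2"
    "card (S \<inter> U') = card (S \<inter> U) - 1" "card (U' - S) = card (U - S) - 1"
    "krawtchouk U S k = krawtchouk U' S k - krawtchouk U' S (k - 2)"
proof -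
  obtain a b where a: "a \<in> S \<inter> U" and b: "b \<in> U - S" using assms(2,3) by blast
  define U' where "U' = U - {a, b}"
  have U: "U = insert a (insert b U')" "a \<notin> U'" "b \<notin> U'" "finite U'"
    using a b assms(1) unfolding U'_def by auto
  have "a \<noteq> b" using a b by auto
  then have "card U' = card U - 2" using a b assms(1) unfolding U'_def by (auto simp: card_Diff_subset)
  moreover have "S \<inter> U = insert a (S \<inter> U')" "U - S = insert b (U' - S)"
    using a b unfolding U'_def by auto
  then have "card (S \<inter> U') = card (S \<inter> U) - 1" "card (U' - S) = card (U - S) - 1" using U by simp_all
  moreover have "krawtchouk U S k = krawtchouk U' S k - krawtchouk U' S (k - 2)"
    unfolding U(1) using krawtchouk_insert2 a b U assms(4) by auto
  ultimately show ?thesis using that U by blast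
qed

lemma abs_krawtchouk_le_remove_pair:
  assumes "finite U" "2 \<le> card (S \<inter> U)" "2 \<le> card (U - S)" "2 \<le> k"
    and smaller: "\<And>U' i. card U' < card U \<Longrightarrow> finite U' \<Longrightarrow> S \<inter> U' \<noteq> {} \<Longrightarrow> U' - S \<noteq> {} \<Longrightarrow>
      \<bar>krawtchouk U' S i\<bar> \<le> krawtchouk_bound (card U') i"
  shows "\<bar>krawtchouk U S k\<bar> \<le> krawtchouk_bound (card U - 2) k + krawtchouk_bound (card U - 2) (k - 2)"
proof -
  have "S \<inter> U \<noteq> {}" "U - S \<noteq> {}" using assms(2,3) by fastforce+
  then obtain U' where U': "finite U'" "card U' = card U - 2"
    "card (S \<inter> U') = card (S \<inter> U) - 1" "card (U' - S) = card (U - S) - 1"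
    "krawtchouk U S k = krawtchouk U' S k - krawtchouk U' S (k - 2)"
    using krawtchouk_remove_pair[OF assms(1) _ _ assms(4)] by blast
  have "card (S \<inter> U) \<le> card U" using assms(1) by (simp add: card_mono)
  then have "card (S \<inter> U') \<noteq> 0" "card (U' - S) \<noteq> 0" "card U' < card U" using U'(2-4) assms(2,3) by auto
  then have "\<bar>krawtchouk U' S i\<bar> \<le> krawtchouk_bound (card U - 2) i" for i
    using smaller[OF _ U'(1)] U'(2) by fastforce
  then show ?thesis unfolding U'(5) by (metis abs_triangle_ineq4 add_mono order_trans)
qed

lemma abs_krawtchouk_le_bound:
  assumes "finite U" "S \<inter> U \<noteq> {}" "U - S \<noteq> {}"
  shows "\<bar>krawtchouk U S k\<bar> \<le> krawtchouk_bound (card U) k"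
  using assms
proof (induction "card U" arbitrary: U S k rule: less_induct)
  case less
  define n where "n = card U"
  have "card (S \<inter> U \<union> (U - S)) = card (S \<inter> U) + card (U - S)"
    using less.prems(1) by (intro card_Un_disjoint) auto
  moreover have "S \<inter> U \<union> (U - S) = U" by auto
  ultimately have split: "card (S \<inter> U) + card (U - S) = n" "1 \<le> card (S \<inter> U)" "1 \<le> card (U - S)"
    using less.prems unfolding n_def by (auto simp: Suc_le_eq card_gt_0_iff)
  \<comment> \<open>by the reflection k \<mapsto> n - k it suffices to treat the upper half n \<le> 2 k\<close>
  have upper_half: "\<bar>krawtchouk U S j\<bar> \<le> krawtchouk_bound n j" if j: "j \<le> n" "n \<le> 2 * j" for j
  proof (cases "card (S \<inter> U) = 1 \<or> card (U - S) = 1")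
    case True
    then show ?thesis using abs_krawtchouk_le_bound_single[OF less.prems(1)] n_def by blast
  next
    case False
    then have "2 \<le> card (S \<inter> U)" "2 \<le> card (U - S)" "2 \<le> j" using split j by auto
    then have "\<bar>krawtchouk U S j\<bar> \<le> krawtchouk_bound (n - 2) j + krawtchouk_bound (n - 2) (j - 2)"
      unfolding n_def by (rule abs_krawtchouk_le_remove_pair[OF less.prems(1)]) (rule less.hyps)
    also have "\<dots> \<le> krawtchouk_bound n j" using krawtchouk_bound_rec_le False split j by simp
    finally show ?thesis .
  qed
  show ?case
  proof (cases "k \<le> n")
    case False
    then show ?thesis
      using krawtchouk_eq_0[OF less.prems(1)] krawtchouk_bound_nonneg[of n] split n_def by simp
  next
    case True
    then show ?thesis
      using upper_half[of "n - k"] abs_krawtchouk_reflect[OF less.prems(1), of k S]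
        krawtchouk_bound_symmetric[OF True] upper_half[of k] n_def by (cases "n \<le> 2 * k") auto
  qed
qed

lemma abs_krawtchouk_less_bound:
  assumes "finite U" "2 \<le> card (S \<inter> U)" "2 \<le> card (U - S)"
    and "5 \<le> card U" "card U + 2 \<le> 2 * k" "k < card U"
  shows "\<bar>krawtchouk U S k\<bar> < krawtchouk_bound (card U) k"
proof -
  have "\<bar>krawtchouk U S k\<bar> \<le> krawtchouk_bound (card U - 2) k + krawtchouk_bound (card U - 2) (k - 2)"
    using assms(4,5) by (intro abs_krawtchouk_le_remove_pair[OF assms(1-3)] abs_krawtchouk_le_bound) auto
  also have "\<dots> < krawtchouk_bound (card U) k" using krawtchouk_bound_rec_less assms by simp
  finally show ?thesis .
qed

lemma krawtchouk_extreme: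
  assumes "0 < n" "even k" "S \<subseteq> {..<n}" "card S = 1 \<or> card S = n - 1"
  shows "krawtchouk {..<n} S k = real (n choose k) * (real n - 2 * real k) / real n"
  using assms(4)
proof
  assume "card S = 1"
  then obtain a where "S \<inter> {..<n} = {a}"
    using assms(3) by (metis card_1_singletonE inf.absorb1)
  then show ?thesis using krawtchouk_singleton[of "{..<n}"] by simp
next
  assume "card S = n - 1"
  then have "card ({..<n} - S) = 1"
    using assms(1,3) card_Diff_subset[of S "{..<n}"] by (auto dest: finite_subset)
  then obtain a where "({..<n} - S) \<inter> {..<n} = {a}" by (metis card_1_singletonE Int_absorb2 Diff_subset)
  then show ?thesis
    using krawtchouk_complement[of "{..<n}" S k] krawtchouk_singleton[of "{..<n}"] assms(2) by simp
qed

lemma krawtchouk_gt_extreme: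
  assumes "even k" "n + 2 \<le> 2 * k" "k < n" "S \<subseteq> {..<n}" "card S \<noteq> 1" "card S \<noteq> n - 1"
  shows "krawtchouk {..<n} S k > real (n choose k) * (real n - 2 * real k) / real n"
proof -
  have n5: "5 \<le> n"
  proof (rule ccontr)
    assume "\<not> 5 \<le> n"
    then have "k = 3" using assms(2,3) by auto
    then show False using assms(1) by simp
  qed
  have neg: "real (n choose k) * (real n - 2 * real k) / real n < 0"
    using assms(2,3) by (intro divide_neg_pos mult_pos_neg) auto
  have fin: "finite S" using assms(4) finite_subset by blast
  have "card S + card ({..<n} - S) = n"
    using card_Diff_subset[OF fin assms(4)] card_mono[OF finite_lessThan assms(4)] by simp
  then consider "card S = 0" | "card S = n" | "2 \<le> card S" "2 \<le> card ({..<n} - S)"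
    using assms(5,6) by linarith
  then show ?thesis
  proof cases
    case 1
    then have "S = {}" using fin by simp
    then show ?thesis using krawtchouk_disjoint[of "{..<n}" S k] neg by simp
  next
    case 2
    then have "S = {..<n}" using card_subset_eq[OF finite_lessThan assms(4)] by simp
    then show ?thesis
      using krawtchouk_complement[of "{..<n}" S k] krawtchouk_disjoint[of "{..<n}" "{}" k] assms(1) neg by simp
  next
    case 3
    moreover have "S \<inter> {..<n} = S" using assms(4) by auto
    ultimately have "\<bar>krawtchouk {..<n} S k\<bar> < krawtchouk_bound (card {..<n}) k"
      using assms(2,3) n5 by (intro abs_krawtchouk_less_bound) auto
    moreover have "krawtchouk_bound (card {..<n}) k = real (n choose k) * (2 * real k - real n) / real n"
      unfolding krawtchouk_bound_def using assms(2) by simp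
    moreover have "real (n choose k) * (real n - 2 * real k) / real n =
        - (real (n choose k) * (2 * real k - real n) / real n)"
      by (simp add: algebra_simps minus_divide_left)
    ultimately show ?thesis by linarith
  qed
qed

lemma krawtchouk_ge_extreme:
  assumes "even k" "n + 2 \<le> 2 * k" "k < n" "S \<subseteq> {..<n}"
  shows "real (n choose k) * (real n - 2 * real k) / real n \<le> krawtchouk {..<n} S k"
proof (cases "card S = 1 \<or> card S = n - 1")
  case True
  then show ?thesis using krawtchouk_extreme[of n k S] assms by simp
next
  case False
  then show ?thesis using krawtchouk_gt_extreme[of k n S] assms by simp
qed

section \<open>Walsh expansion of kernels on the cube\<close>

definition bilin_form :: "'a set \<Rightarrow> ('a \<Rightarrow> 'a \<Rightarrow> real) \<Rightarrow> ('a \<Rightarrow> real) \<Rightarrow> ('a \<Rightarrow> real) \<Rightarrow> real" where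
  "bilin_form V G u v = (\<Sum>x\<in>V. \<Sum>y\<in>V. u x * v y * G x y)"

definition psd_on :: "'a set \<Rightarrow> ('a \<Rightarrow> 'a \<Rightarrow> real) \<Rightarrow> bool" where
  "psd_on V G \<longleftrightarrow> (\<forall>c. 0 \<le> bilin_form V G c c)"

lemma bilin_form_commute:
  assumes "\<And>x y. x \<in> V \<Longrightarrow> y \<in> V \<Longrightarrow> G x y = G y x"
  shows "bilin_form V G u v = bilin_form V G v u"
  unfolding bilin_form_def using assms by (subst sum.swap) (auto intro!: sum.cong simp: mult_ac)

lemma bilin_form_add_smult:
  "bilin_form V G (\<lambda>x. t * u x + v x) (\<lambda>x. t * u x + v x) =
    t\<^sup>2 * bilin_form V G u u + t * (bilin_form V G u v + bilin_form V G v u) + bilin_form V G v v"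
  unfolding bilin_form_def
  by (simp add: algebra_simps power2_eq_square sum.distrib sum_distrib_left)

lemma psd_on_bilin_form_eq_0:
  assumes "psd_on V G" "\<And>x y. x \<in> V \<Longrightarrow> y \<in> V \<Longrightarrow> G x y = G y x"
    and "bilin_form V G u u = 0"
  shows "bilin_form V G u v = 0"
proof (rule ccontr)
  define B C where "B = bilin_form V G u v" "C = bilin_form V G v v"
  assume "bilin_form V G u v \<noteq> 0"
  then have "B \<noteq> 0" unfolding B_C_def .
  \<comment> \<open>the form at t u + v is affine in t with slope 2 B, so it takes the value -1\<close>
  define t where "t = - (C + 1) / (2 * B)"
  have "0 \<le> bilin_form V G (\<lambda>x. t * u x + v x) (\<lambda>x. t * u x + v x)"
    using assms(1) unfolding psd_on_def by blast
  also have "\<dots> = t * (2 * B) + C"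
    unfolding bilin_form_add_smult assms(3) B_C_def
    using bilin_form_commute[where u = v and v = u, OF assms(2)] by simp
  also have "\<dots> = -1" unfolding t_def using \<open>B \<noteq> 0\<close> by simp
  finally show False by simp
qed

lemma sum_walsh:
  assumes "finite U" "z \<subseteq> U"
  shows "(\<Sum>S\<in>Pow U. walsh S z) = (if z = {} then 2 ^ card U else 0)"
  using assms
proof (induction U arbitrary: z rule: finite_induct)
  case (insert a A)
  have inj: "inj_on (insert a) (Pow A)"
    using insert.hyps(2) unfolding inj_on_def by (metis Pow_iff insert_ident subset_iff)
  have "(\<Sum>S\<in>Pow (insert a A). walsh S z) = (\<Sum>S\<in>Pow A. walsh S z) + (\<Sum>S\<in>Pow A. walsh (insert a S) z)"
    unfolding Pow_insert using insert.hyps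
    by (subst sum.union_disjoint) (auto simp: sum.reindex[OF inj])
  also have "(\<Sum>S\<in>Pow A. walsh (insert a S) z) = (if a \<in> z then -1 else 1) * (\<Sum>S\<in>Pow A. walsh S z)"
  proof (unfold sum_distrib_left, intro sum.cong refl)
    fix S assume "S \<in> Pow A"
    then have "finite S" "a \<notin> S" using insert.hyps finite_subset by auto
    then show "walsh (insert a S) z = (if a \<in> z then -1 else 1) * walsh S z"
      by (simp add: walsh_commute[of _ z] walsh_insert)
  qed
  finally have step: "(\<Sum>S\<in>Pow (insert a A). walsh S z) =
      (1 + (if a \<in> z then -1 else 1)) * (\<Sum>S\<in>Pow A. walsh S z)"
    by (simp add: algebra_simps)
  show ?case
  proof (cases "a \<in> z")
    case False
    then have "z \<subseteq> A" using insert.prems by auto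
    then show ?thesis using step insert.IH[of z] insert.hyps False by simp
  qed (use step in auto)
qed (simp add: walsh_def)

lemma sum_walsh_mult:
  assumes "finite U" "x \<subseteq> U" "y \<subseteq> U"
  shows "(\<Sum>S\<in>Pow U. walsh S x * walsh S y) = (if x = y then 2 ^ card U else 0)"
proof -
  have "finite x" "finite y" using assms finite_subset by auto
  then have "(\<Sum>S\<in>Pow U. walsh S x * walsh S y) = (\<Sum>S\<in>Pow U. walsh S (sym_diff x y))"
    by (simp add: walsh_sym_diff)
  moreover have "sym_diff x y = {} \<longleftrightarrow> x = y" "sym_diff x y \<subseteq> U" using assms by auto
  ultimately show ?thesis using sum_walsh[OF assms(1), of "sym_diff x y"] by simp
qed

lemma sum_swap3:
  "(\<Sum>a\<in>A. \<Sum>b\<in>B. \<Sum>c\<in>C. f a b c) = (\<Sum>b\<in>B. \<Sum>c\<in>C. \<Sum>a\<in>A. f a b c)"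
  by (subst sum.swap) (intro sum.cong refl sum.swap)

lemma sum_swap_pairs:
  "(\<Sum>a\<in>A. \<Sum>b\<in>B. \<Sum>c\<in>C. \<Sum>d\<in>D. f a b c d) = (\<Sum>c\<in>C. \<Sum>d\<in>D. \<Sum>a\<in>A. \<Sum>b\<in>B. f a b c d)"
  by (subst sum_swap3) (intro sum.cong refl sum_swap3)

lemma walsh_inversion:
  assumes "finite U" "V \<subseteq> Pow U" "x0 \<in> V" "y0 \<in> V"
  shows "(\<Sum>S\<in>Pow U. \<Sum>R\<in>Pow U. walsh S x0 * walsh R y0 * bilin_form V G (walsh S) (walsh R)) =
    2 ^ card U * 2 ^ card U * G x0 y0"
proof -
  have sub: "x \<subseteq> U" if "x \<in> V" for x using that assms(2) by auto
  have "(\<Sum>S\<in>Pow U. \<Sum>R\<in>Pow U. walsh S x0 * walsh R y0 * bilin_form V G (walsh S) (walsh R)) =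
      (\<Sum>S\<in>Pow U. \<Sum>R\<in>Pow U. \<Sum>x\<in>V. \<Sum>y\<in>V. G x y * ((walsh S x0 * walsh S x) * (walsh R y0 * walsh R y)))"
    unfolding bilin_form_def by (simp add: sum_distrib_left mult_ac)
  also have "\<dots> = (\<Sum>x\<in>V. \<Sum>y\<in>V. \<Sum>S\<in>Pow U. \<Sum>R\<in>Pow U. G x y * ((walsh S x0 * walsh S x) * (walsh R y0 * walsh R y)))"
    by (rule sum_swap_pairs)
  also have "\<dots> = (\<Sum>x\<in>V. \<Sum>y\<in>V. G x y * ((\<Sum>S\<in>Pow U. walsh S x0 * walsh S x) * (\<Sum>R\<in>Pow U. walsh R y0 * walsh R y)))"
    unfolding sum_product by (simp only: sum_distrib_left)
  also have "\<dots> = (\<Sum>x\<in>V. \<Sum>y\<in>V. if x = x0 then if y = y0 then 2 ^ card U * 2 ^ card U * G x0 y0 else 0 else 0)"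
    using assms by (intro sum.cong refl) (auto simp: sum_walsh_mult sub)
  also have "\<dots> = (\<Sum>x\<in>V. if x = x0 then \<Sum>y\<in>V. if y = y0 then 2 ^ card U * 2 ^ card U * G x0 y0 else 0 else 0)"
    by (intro sum.cong refl) auto
  also have "\<dots> = 2 ^ card U * 2 ^ card U * G x0 y0"
    using assms(3,4) finite_subset[OF assms(2)] assms(1) by (simp add: sum.delta)
  finally show ?thesis .
qed

lemma sum_bilin_form_walsh_diag:
  assumes "finite U" "V \<subseteq> Pow U"
  shows "(\<Sum>S\<in>Pow U. bilin_form V G (walsh S) (walsh S)) = 2 ^ card U * (\<Sum>x\<in>V. G x x)"
proof -
  have sub: "x \<subseteq> U" if "x \<in> V" for x using that assms(2) by auto
  have "(\<Sum>S\<in>Pow U. bilin_form V G (walsh S) (walsh S)) =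
      (\<Sum>S\<in>Pow U. \<Sum>x\<in>V. \<Sum>y\<in>V. G x y * (walsh S x * walsh S y))"
    unfolding bilin_form_def by (simp add: mult_ac)
  also have "\<dots> = (\<Sum>x\<in>V. \<Sum>y\<in>V. \<Sum>S\<in>Pow U. G x y * (walsh S x * walsh S y))"
    by (rule sum_swap3)
  also have "\<dots> = (\<Sum>x\<in>V. \<Sum>y\<in>V. if x = y then 2 ^ card U * G x x else 0)"
    using assms(1) by (intro sum.cong refl) (auto simp: sum_walsh_mult sub simp flip: sum_distrib_left)
  also have "\<dots> = 2 ^ card U * (\<Sum>x\<in>V. G x x)"
    using finite_subset[OF assms(2)] assms(1) by (simp add: sum_distrib_left)
  finally show ?thesis .
qed

lemma sum_bilin_form_walsh_krawtchouk:
  assumes "finite U" "V \<subseteq> Pow U"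
  shows "(\<Sum>S\<in>Pow U. bilin_form V G (walsh S) (walsh S) * krawtchouk U S k) =
    2 ^ card U * (\<Sum>x\<in>V. \<Sum>y\<in>V. if card (sym_diff x y) = k then G x y else 0)"
proof -
  let ?Tk = "{T. T \<subseteq> U \<and> card T = k}"
  have sub: "x \<subseteq> U" if "x \<in> V" for x using that assms(2) by auto
  have fin: "finite x" if "x \<in> V" for x using sub[OF that] assms(1) finite_subset by blast
  have "(\<Sum>S\<in>Pow U. bilin_form V G (walsh S) (walsh S) * krawtchouk U S k) =
      (\<Sum>S\<in>Pow U. \<Sum>x\<in>V. \<Sum>y\<in>V. \<Sum>T\<in>?Tk. G x y * (walsh S x * walsh S y * walsh S T))"
    unfolding bilin_form_def krawtchouk_def by (simp add: sum_distrib_left sum_distrib_right mult_ac)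
  also have "\<dots> = (\<Sum>x\<in>V. \<Sum>y\<in>V. \<Sum>S\<in>Pow U. \<Sum>T\<in>?Tk. G x y * (walsh S x * walsh S y * walsh S T))"
    by (rule sum_swap3)
  also have "\<dots> = (\<Sum>x\<in>V. \<Sum>y\<in>V. \<Sum>T\<in>?Tk. G x y * (\<Sum>S\<in>Pow U. walsh S (sym_diff x y) * walsh S T))"
  proof (rule sum.cong[OF refl], rule sum.cong[OF refl])
    fix x y assume "x \<in> V" "y \<in> V"
    then show "(\<Sum>S\<in>Pow U. \<Sum>T\<in>?Tk. G x y * (walsh S x * walsh S y * walsh S T)) =
        (\<Sum>T\<in>?Tk. G x y * (\<Sum>S\<in>Pow U. walsh S (sym_diff x y) * walsh S T))"
      by (subst sum.swap) (simp add: sum_distrib_left walsh_sym_diff fin)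
  qed
  also have "\<dots> = (\<Sum>x\<in>V. \<Sum>y\<in>V. \<Sum>T\<in>?Tk. if sym_diff x y = T then 2 ^ card U * G x y else 0)"
  proof (intro sum.cong refl)
    fix x y T assume "x \<in> V" "y \<in> V" "T \<in> ?Tk"
    moreover have "sym_diff x y \<subseteq> U" using sub calculation by blast
    ultimately show "G x y * (\<Sum>S\<in>Pow U. walsh S (sym_diff x y) * walsh S T) =
        (if sym_diff x y = T then 2 ^ card U * G x y else 0)"
      using assms(1) by (simp add: sum_walsh_mult)
  qed
  also have "\<dots> = 2 ^ card U * (\<Sum>x\<in>V. \<Sum>y\<in>V. if card (sym_diff x y) = k then G x y else 0)"
  proof (unfold sum_distrib_left, intro sum.cong refl)
    fix x y assume "x \<in> V" "y \<in> V"
    then have "sym_diff x y \<subseteq> U" using sub by blast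
    moreover have "finite ?Tk" using assms(1) by simp
    ultimately show "(\<Sum>T\<in>?Tk. if sym_diff x y = T then 2 ^ card U * G x y else 0) =
        2 ^ card U * (if card (sym_diff x y) = k then G x y else 0)"
      by (simp add: sum.delta')
  qed
  finally show ?thesis .
qed

section \<open>The even cube\<close>

lemma even_cube_subset: "x \<in> even_cube n \<Longrightarrow> x \<subseteq> {..<n}"
  unfolding even_cube_def by auto

lemma even_cube_subset_Pow: "even_cube n \<subseteq> Pow {..<n}"
  unfolding even_cube_def by auto

lemma finite_even_cube: "finite (even_cube n)"
  using even_cube_subset_Pow by (rule finite_subset) simp

lemma empty_in_even_cube: "{} \<in> even_cube n"
  unfolding even_cube_def by simp

lemma sym_diff_in_even_cube:
  assumes "x \<in> even_cube n" "T \<subseteq> {..<n}" "even (card T)"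
  shows "sym_diff x T \<in> even_cube n"
proof -
  have x: "x \<subseteq> {..<n}" "even (card x)" using assms(1) unfolding even_cube_def by auto
  then have "finite x" "finite T" using assms(2) finite_subset by blast+
  then have "card (sym_diff x T) + 2 * card (x \<inter> T) = card x + card T" by (rule card_sym_diff)
  then have "even (card (sym_diff x T) + 2 * card (x \<inter> T))" using x(2) assms(3) by simp
  then have "even (card (sym_diff x T))" by simp
  moreover have "sym_diff x T \<subseteq> {..<n}" using x(1) assms(2) by blast
  ultimately show ?thesis unfolding even_cube_def by simp
qed

lemma walsh_cosingleton:
  assumes "y \<in> even_cube n" "j < n"
  shows "walsh ({..<n} - {j}) y = walsh {j} y"
proof -
  have y: "finite y" "even (card y)" "({..<n} - {j}) \<inter> y = y - {j}"
    using assms even_cube_subset[OF assms(1)] finite_subset unfolding even_cube_def by auto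
  show ?thesis
  proof (cases "j \<in> y")
    case True
    then have "card y = Suc (card (y - {j}))" using card_Suc_Diff1[OF y(1) True] by simp
    then show ?thesis unfolding walsh_def y(3) using True y(2) by auto
  qed (use y in \<open>simp add: walsh_def\<close>)
qed

lemma walsh_eq_singleton_on_even_cube:
  assumes "R \<subseteq> {..<n}" "card R = 1 \<or> card R = n - 1" "0 < n"
  shows "\<exists>j<n. \<forall>y\<in>even_cube n. walsh R y = walsh {j} y"
  using assms(2)
proof
  assume "card R = 1"
  then obtain j where "R = {j}" by (metis card_1_singletonE)
  then show ?thesis using assms(1) by auto
next
  assume "card R = n - 1"
  then have "card ({..<n} - R) = 1" using assms(1,3) by (simp add: card_Diff_subset finite_subset)
  then obtain j where "{..<n} - R = {j}" by (metis card_1_singletonE)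
  then have "R = {..<n} - {j}" "j < n" using assms(1) by auto
  then show ?thesis using walsh_cosingleton by auto
qed

lemma sum_walsh_singletons:
  fixes n :: nat
  assumes "T \<subseteq> {..<n}"
  shows "(\<Sum>j<n. c j * walsh {j} T) = (\<Sum>j<n. c j) - 2 * (\<Sum>j\<in>T. c j)"
proof -
  have "(\<Sum>j<n. c j * walsh {j} T) = (\<Sum>j<n. c j - 2 * (if j \<in> T then c j else 0))"
    unfolding walsh_singleton by (intro sum.cong refl) auto
  also have "\<dots> = (\<Sum>j<n. c j) - 2 * (\<Sum>j<n. if j \<in> T then c j else 0)"
    by (simp add: sum_subtractf sum_distrib_left)
  also have "(\<Sum>j<n. if j \<in> T then c j else 0) = sum c ({..<n} \<inter> T)"
    by (rule sum.inter_restrict[symmetric]) simp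
  finally show ?thesis using assms by (simp add: Int_absorb1)
qed

lemma neighbours_in_even_cube:
  assumes "even k" "x \<in> even_cube n"
  shows "{y \<in> even_cube n. hamming x y = k} = sym_diff x ` {T. T \<subseteq> {..<n} \<and> card T = k}"
proof (intro equalityI subsetI)
  fix y assume y: "y \<in> {y \<in> even_cube n. hamming x y = k}"
  then have "sym_diff x y \<in> {T. T \<subseteq> {..<n} \<and> card T = k}"
    using even_cube_subset assms(2) unfolding hamming_def by auto
  moreover have "y = sym_diff x (sym_diff x y)" by auto
  ultimately show "y \<in> sym_diff x ` {T. T \<subseteq> {..<n} \<and> card T = k}" by blast
next
  fix y assume "y \<in> sym_diff x ` {T. T \<subseteq> {..<n} \<and> card T = k}"
  then obtain T where T: "T \<subseteq> {..<n}" "card T = k" "y = sym_diff x T" by auto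
  moreover have "sym_diff x (sym_diff x T) = T" by auto
  ultimately show "y \<in> {y \<in> even_cube n. hamming x y = k}"
    using sym_diff_in_even_cube[OF assms(2) T(1)] assms(1) unfolding hamming_def by auto
qed

lemma card_H_edges:
  assumes "even k"
  shows "card (H_edges n k) = card (even_cube n) * (n choose k)"
proof -
  have "H_edges n k = Sigma (even_cube n) (\<lambda>x. {y \<in> even_cube n. hamming x y = k})"
    unfolding H_edges_def by auto
  moreover have "card {y \<in> even_cube n. hamming x y = k} = n choose k" if "x \<in> even_cube n" for x
  proof -
    have "inj_on (sym_diff x) {T. T \<subseteq> {..<n} \<and> card T = k}" by (rule inj_onI) auto
    then show ?thesis
      unfolding neighbours_in_even_cube[OF assms that] by (simp add: card_image n_subsets)
  qed
  ultimately show ?thesis using finite_even_cube by (simp add: card_SigmaI)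
qed

lemma sum_H_edges:
  "(\<Sum>(x, y)\<in>H_edges n k. G x y) =
    (\<Sum>x\<in>even_cube n. \<Sum>y\<in>even_cube n. if card (sym_diff x y) = k then G x y else 0)"
proof -
  have "H_edges n k = Sigma (even_cube n) (\<lambda>x. {y \<in> even_cube n. card (sym_diff x y) = k})"
    unfolding H_edges_def hamming_def by auto
  then have "(\<Sum>(x, y)\<in>H_edges n k. G x y) =
      (\<Sum>x\<in>even_cube n. \<Sum>y\<in>{y \<in> even_cube n. card (sym_diff x y) = k}. G x y)"
    using finite_even_cube by (simp add: sum.Sigma)
  then show ?thesis using finite_even_cube by (simp add: sum.inter_filter)
qed

lemma eq_if_sums_on_k_subsets_eq:
  fixes c :: "nat \<Rightarrow> real"
  assumes "\<And>T. T \<subseteq> {..<n} \<Longrightarrow> card T = k \<Longrightarrow> sum c T = s" "1 \<le> k" "k < n" "i < n" "j < n"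
  shows "c i = c j"
proof (cases "i = j")
  case False
  have "k - 1 \<le> card ({..<n} - {i, j})" using assms False by (simp add: card_Diff_subset)
  then obtain T where T: "T \<subseteq> {..<n} - {i, j}" "card T = k - 1" "finite T"
    by (meson obtain_subset_with_card_n)
  then have "i \<notin> T" "j \<notin> T" "insert i T \<subseteq> {..<n}" "insert j T \<subseteq> {..<n}"
    using assms(4,5) by auto
  moreover have "card (insert i T) = k" "card (insert j T) = k"
    using T calculation assms(2) by simp_all
  ultimately have "sum c (insert i T) = s" "sum c (insert j T) = s" using assms(1) by blast+
  then show ?thesis using T(3) \<open>i \<notin> T\<close> \<open>j \<notin> T\<close> by simp
qed simp

lemma ex_coeffs_if_each_term_among:
  fixes f :: "nat \<Rightarrow> 'a \<Rightarrow> real"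
  assumes "finite A" "\<And>R. R \<in> A \<Longrightarrow> \<exists>j<n. \<forall>y\<in>Y. h R y = f j y"
  shows "\<exists>b. \<forall>y\<in>Y. (\<Sum>R\<in>A. e R * h R y) = (\<Sum>j<n. b j * f j y)"
  using assms
proof (induction A rule: finite_induct)
  case empty
  show ?case by (rule exI[of _ "\<lambda>_. 0"]) simp
next
  case (insert R A)
  obtain b where b: "\<forall>y\<in>Y. (\<Sum>R\<in>A. e R * h R y) = (\<Sum>j<n. b j * f j y)"
    using insert by blast
  obtain j where j: "j < n" "\<forall>y\<in>Y. h R y = f j y" using insert.prems by blast
  show ?case
  proof (intro exI[of _ "\<lambda>i. b i + (if i = j then e R else 0)"] ballI)
    fix y assume "y \<in> Y"
    have "(\<Sum>i<n. (b i + (if i = j then e R else 0)) * f i y) =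
        (\<Sum>i<n. b i * f i y + (if i = j then e R * f j y else 0))"
      by (intro sum.cong) (auto simp: algebra_simps)
    also have "\<dots> = (\<Sum>i<n. b i * f i y) + (\<Sum>i<n. if i = j then e R * f j y else 0)"
      by (rule sum.distrib)
    also have "\<dots> = (\<Sum>R\<in>A. e R * h R y) + e R * h R y"
      using j \<open>y \<in> Y\<close> b by simp
    finally show "(\<Sum>R\<in>insert R A. e R * h R y) = (\<Sum>i<n. (b i + (if i = j then e R else 0)) * f i y)"
      using insert.hyps by simp
  qed
qed

lemma walsh_singletons_expansion_rigid:
  fixes b :: "nat \<Rightarrow> real" and g :: "nat set \<Rightarrow> real"
  assumes "x0 \<subseteq> {..<n}" "1 \<le> k" "k < n"
    and expansion: "\<And>y. y \<in> Y \<Longrightarrow> g y = (\<Sum>j<n. b j * walsh {j} y)"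
    and "x0 \<in> Y" "g x0 = 1"
    and neighbours: "\<And>T. T \<subseteq> {..<n} \<Longrightarrow> card T = k \<Longrightarrow> sym_diff x0 T \<in> Y \<and> g (sym_diff x0 T) = - a"
    and "y \<in> Y" "y \<subseteq> {..<n}"
  shows "g y = 1 - 2 * real (card (sym_diff x0 y)) / real n"
proof -
  have fin: "finite x0" "finite y" using assms(1,9) finite_subset by blast+
  define c where "c j = b j * walsh {j} x0" for j
  have g: "g z = (\<Sum>j<n. c j * walsh {j} (sym_diff x0 z))" if "z \<in> Y" "finite z" for z
    unfolding expansion[OF that(1)] c_def walsh_sym_diff[OF fin(1) that(2)]
    by (intro sum.cong refl) (simp add: walsh_mult_self mult_ac)
  have "sym_diff x0 x0 = {}" by simp
  then have sum_c: "(\<Sum>j<n. c j) = 1" using g[OF assms(5) fin(1)] assms(6) by (simp add: walsh_def)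
  have "sum c T = (1 + a) / 2" if "T \<subseteq> {..<n}" "card T = k" for T
  proof -
    have "sym_diff x0 (sym_diff x0 T) = T" by auto
    moreover have "finite (sym_diff x0 T)" using fin(1) that(1) finite_subset by auto
    ultimately have "- a = (\<Sum>j<n. c j * walsh {j} T)"
      using neighbours[OF that] g[of "sym_diff x0 T"] by simp
    then show ?thesis using sum_walsh_singletons[OF that(1)] sum_c by simp
  qed
  then have c_eq: "c j = c 0" if "j < n" for j
    by (rule eq_if_sums_on_k_subsets_eq[of n k c]) (use assms(2,3) that in auto)
  have "(\<Sum>j<n. c j) = (\<Sum>j<n. c 0)" by (rule sum.cong) (auto intro!: c_eq)
  then have "(\<Sum>j<n. c j) = real n * c 0" by simp
  then have "c j = 1 / real n" if "j < n" for j
    using c_eq[OF that] sum_c assms(3) by (simp add: field_simps)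
  then have "g y = (\<Sum>j<n. walsh {j} (sym_diff x0 y)) / real n"
    unfolding g[OF assms(8) fin(2)] sum_divide_distrib by (intro sum.cong refl) simp
  also have "\<dots> = 1 - 2 * real (card (sym_diff x0 y)) / real n"
    using sum_walsh_singletons[of "sym_diff x0 y" n "\<lambda>_. 1"] assms(1,3,9) by (auto simp: field_simps)
  finally show ?thesis .
qed

section \<open>Rigidity of positive semidefinite kernels\<close>

locale psd_cube_kernel =
  fixes n k :: nat and G :: "nat set \<Rightarrow> nat set \<Rightarrow> real"
  assumes k_even: "even k" and k_large: "n + 2 \<le> 2 * k" and k_less: "k < n"
    and symmetric: "\<And>x y. x \<in> even_cube n \<Longrightarrow> y \<in> even_cube n \<Longrightarrow> G x y = G y x"
    and psd: "psd_on (even_cube n) G"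
    and diag: "\<And>x. x \<in> even_cube n \<Longrightarrow> G x x = 1"
begin

lemma sum_H_edges_eq_walsh:
  "2 ^ n * (\<Sum>(x, y)\<in>H_edges n k. G x y) =
    (\<Sum>S\<in>Pow {..<n}. bilin_form (even_cube n) G (walsh S) (walsh S) * krawtchouk {..<n} S k)"
  using sum_bilin_form_walsh_krawtchouk[OF _ even_cube_subset_Pow] by (simp add: sum_H_edges)

lemma sum_walsh_diag:
  "(\<Sum>S\<in>Pow {..<n}. bilin_form (even_cube n) G (walsh S) (walsh S)) = 2 ^ n * real (card (even_cube n))"
  using sum_bilin_form_walsh_diag[OF _ even_cube_subset_Pow, of n G] diag by simp

lemma walsh_diag_nonneg: "0 \<le> bilin_form (even_cube n) G (walsh S) (walsh S)"
  using psd unfolding psd_on_def by blast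

(* Delsarte's bound: the edge sum weighs each K_k(|S|) >= K_k(1) with a nonnegative coefficient. *)
lemma sum_H_edges_ge:
  "real (n choose k) * (real n - 2 * real k) / real n * real (card (even_cube n)) \<le>
    (\<Sum>(x, y)\<in>H_edges n k. G x y)"
proof -
  define K where "K = real (n choose k) * (real n - 2 * real k) / real n"
  have "2 ^ n * (K * real (card (even_cube n))) =
      (\<Sum>S\<in>Pow {..<n}. bilin_form (even_cube n) G (walsh S) (walsh S) * K)"
    unfolding sum_distrib_right[symmetric] sum_walsh_diag by simp
  also have "\<dots> \<le> 2 ^ n * (\<Sum>(x, y)\<in>H_edges n k. G x y)"
    unfolding sum_H_edges_eq_walsh
    unfolding K_def using krawtchouk_ge_extreme[OF k_even k_large k_less]
    by (intro sum_mono mult_left_mono walsh_diag_nonneg) auto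
  finally show ?thesis unfolding K_def[symmetric] by simp
qed

lemma sum_H_edges_le:
  assumes "\<And>x y. (x, y) \<in> H_edges n k \<Longrightarrow> G x y \<le> - a"
  shows "(\<Sum>(x, y)\<in>H_edges n k. G x y) \<le> - a * (real (card (even_cube n)) * real (n choose k))"
proof -
  have "(\<Sum>(x, y)\<in>H_edges n k. G x y) \<le> (\<Sum>(x, y)\<in>H_edges n k. - a)"
    using assms by (intro sum_mono) auto
  then show ?thesis using card_H_edges[OF k_even] by (simp add: mult_ac)
qed

lemma H_edge_bound:
  assumes "\<And>x y. (x, y) \<in> H_edges n k \<Longrightarrow> G x y \<le> - a"
  shows "a \<le> (2 * real k - real n) / real n"
proof -
  have "0 < card (even_cube n)" using finite_even_cube empty_in_even_cube card_gt_0_iff by blast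
  then have pos: "0 < real (card (even_cube n)) * real (n choose k)" using k_less by simp
  have "real (n choose k) * (real n - 2 * real k) / real n * real (card (even_cube n)) \<le>
      - a * (real (card (even_cube n)) * real (n choose k))"
    using sum_H_edges_ge sum_H_edges_le[OF assms] by linarith
  then have "a * (real (card (even_cube n)) * real (n choose k)) \<le>
      (2 * real k - real n) / real n * (real (card (even_cube n)) * real (n choose k))"
    using k_less by (simp add: field_simps)
  then show ?thesis using pos by (rule mult_right_le_imp_le)
qed

lemma extreme_value_eq:
  "real (n choose k) * (real n - 2 * real k) / real n * real (card (even_cube n)) =
    - ((2 * real k - real n) / real n) * (real (card (even_cube n)) * real (n choose k))"
  using k_less by (simp add: field_simps)

context
  assumes H_edges_bound: "\<And>x y. (x, y) \<in> H_edges n k \<Longrightarrow> G x y \<le> - ((2 * real k - real n) / real n)"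
begin

lemma sum_H_edges_eq:
  "(\<Sum>(x, y)\<in>H_edges n k. G x y) =
    real (n choose k) * (real n - 2 * real k) / real n * real (card (even_cube n))"
  using sum_H_edges_ge sum_H_edges_le[OF H_edges_bound] extreme_value_eq by linarith

lemma walsh_diag_eq_0:
  assumes "S \<subseteq> {..<n}" "card S \<noteq> 1" "card S \<noteq> n - 1"
  shows "bilin_form (even_cube n) G (walsh S) (walsh S) = 0"
proof -
  define K where "K = real (n choose k) * (real n - 2 * real k) / real n"
  define F where "F S = bilin_form (even_cube n) G (walsh S) (walsh S)" for S
  have "(\<Sum>S\<in>Pow {..<n}. F S * (krawtchouk {..<n} S k - K)) =
      2 ^ n * (\<Sum>(x, y)\<in>H_edges n k. G x y) - K * (2 ^ n * real (card (even_cube n)))"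
    unfolding sum_H_edges_eq_walsh sum_walsh_diag[symmetric] F_def
    by (simp add: algebra_simps sum_subtractf sum_distrib_left)
  also have "\<dots> = 0" unfolding sum_H_edges_eq K_def by simp
  finally have "(\<Sum>S\<in>Pow {..<n}. F S * (krawtchouk {..<n} S k - K)) = 0" .
  moreover have "0 \<le> F S * (krawtchouk {..<n} S k - K)" if "S \<subseteq> {..<n}" for S
    unfolding F_def K_def using walsh_diag_nonneg krawtchouk_ge_extreme[OF k_even k_large k_less that]
    by simp
  ultimately have "F S * (krawtchouk {..<n} S k - K) = 0"
    using assms(1) by (subst (asm) sum_nonneg_eq_0_iff) auto
  moreover have "K < krawtchouk {..<n} S k"
    unfolding K_def using krawtchouk_gt_extreme[OF k_even k_large k_less assms] .
  ultimately show ?thesis unfolding F_def by simp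
qed

lemma walsh_eq_0:
  assumes "R \<subseteq> {..<n}" "card R \<noteq> 1" "card R \<noteq> n - 1"
  shows "bilin_form (even_cube n) G (walsh S) (walsh R) = 0"
proof -
  have "bilin_form (even_cube n) G (walsh R) (walsh S) = 0"
    by (rule psd_on_bilin_form_eq_0[OF psd symmetric walsh_diag_eq_0[OF assms]])
  then show ?thesis using bilin_form_commute[where u = "walsh S" and v = "walsh R", OF symmetric] by simp
qed

lemma H_edges_tight:
  assumes "(x, y) \<in> H_edges n k"
  shows "G x y = - ((2 * real k - real n) / real n)"
proof -
  have "(\<Sum>(x, y)\<in>H_edges n k. - ((2 * real k - real n) / real n) - G x y) = 0"
    using card_H_edges[OF k_even] sum_H_edges_eq extreme_value_eq
    by (simp add: sum_subtractf split_def)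
  moreover have "finite (H_edges n k)"
    by (rule finite_subset[of _ "even_cube n \<times> even_cube n"]) (auto simp: H_edges_def finite_even_cube)
  ultimately have "\<forall>(x, y)\<in>H_edges n k. - ((2 * real k - real n) / real n) - G x y = 0"
    using H_edges_bound by (subst (asm) sum_nonneg_eq_0_iff) auto
  then show ?thesis using assms by auto
qed

(* Only characters with |R| = 1 or n - 1 survive the inversion, and on the even cube these agree
   with the coordinate characters. *)
lemma row_walsh_expansion:
  assumes "x \<in> even_cube n"
  obtains b where "\<And>z. z \<in> even_cube n \<Longrightarrow> G x z = (\<Sum>j<n. b j * walsh {j} z)"
proof -
  let ?A = "{R \<in> Pow {..<n}. card R = 1 \<or> card R = n - 1}"
  let ?F = "\<lambda>S R. bilin_form (even_cube n) G (walsh S) (walsh R)"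
  define e where "e R = (\<Sum>S\<in>Pow {..<n}. walsh S x * ?F S R) / (2 ^ n * 2 ^ n)" for R
  have "G x z = (\<Sum>R\<in>?A. e R * walsh R z)" if "z \<in> even_cube n" for z
  proof -
    have "2 ^ n * 2 ^ n * G x z = (\<Sum>S\<in>Pow {..<n}. \<Sum>R\<in>Pow {..<n}. walsh S x * walsh R z * ?F S R)"
      using walsh_inversion[OF _ even_cube_subset_Pow assms that] by simp
    also have "\<dots> = (\<Sum>R\<in>Pow {..<n}. 2 ^ n * 2 ^ n * (e R * walsh R z))"
      unfolding e_def by (subst sum.swap) (simp add: sum_distrib_left sum_divide_distrib mult_ac)
    also have "\<dots> = (\<Sum>R\<in>?A. 2 ^ n * 2 ^ n * (e R * walsh R z))"
    proof (rule sum.mono_neutral_right)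
      show "\<forall>R\<in>Pow {..<n} - ?A. 2 ^ n * 2 ^ n * (e R * walsh R z) = 0"
        unfolding e_def using walsh_eq_0 by simp
    qed auto
    also have "\<dots> = 2 ^ n * 2 ^ n * (\<Sum>R\<in>?A. e R * walsh R z)"
      by (simp only: sum_distrib_left)
    finally show ?thesis by simp
  qed
  moreover have "\<exists>j<n. \<forall>z\<in>even_cube n. walsh R z = walsh {j} z" if "R \<in> ?A" for R
    using walsh_eq_singleton_on_even_cube that k_less by auto
  moreover have "finite ?A" by simp
  ultimately show ?thesis
    using ex_coeffs_if_each_term_among[of ?A n "even_cube n" walsh "\<lambda>j. walsh {j}" e] that by auto
qed

theorem gram_rigidity:
  assumes "x \<in> even_cube n" "y \<in> even_cube n"
  shows "G x y = 1 - 2 * real (hamming x y) / real n"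
proof -
  obtain b where b: "\<And>z. z \<in> even_cube n \<Longrightarrow> G x z = (\<Sum>j<n. b j * walsh {j} z)"
    using row_walsh_expansion[OF assms(1)] by blast
  have neighbours: "sym_diff x T \<in> even_cube n \<and> G x (sym_diff x T) = - ((2 * real k - real n) / real n)"
    if "T \<subseteq> {..<n}" "card T = k" for T
  proof
    show "sym_diff x T \<in> even_cube n" using sym_diff_in_even_cube[OF assms(1) that(1)] that(2) k_even by simp
    moreover have "sym_diff x (sym_diff x T) = T" by auto
    ultimately show "G x (sym_diff x T) = - ((2 * real k - real n) / real n)"
      using H_edges_tight assms(1) that(2) unfolding H_edges_def hamming_def by simp
  qed
  have "1 \<le> k" using k_large k_less by simp
  then have "G x y = 1 - 2 * real (card (sym_diff x y)) / real n"
    by (rule walsh_singletons_expansion_rigid[OF even_cube_subset[OF assms(1)] _ k_less b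
          assms(1) diag[OF assms(1)] neighbours assms(2) even_cube_subset[OF assms(2)]])
  then show ?thesis unfolding hamming_def .
qed

end

end

section \<open>Vector colourings\<close>

lemma ip_commute: "ip d u v = ip d v u"
  unfolding ip_def by (simp add: mult.commute)

lemma psd_on_gram: "psd_on V (\<lambda>x y. ip d (p x) (p y))"
  unfolding psd_on_def
proof
  fix c :: "'a \<Rightarrow> real"
  have "bilin_form V (\<lambda>x y. ip d (p x) (p y)) c c = (\<Sum>i<d. (\<Sum>x\<in>V. c x * p x i)\<^sup>2)"
    unfolding bilin_form_def ip_def power2_eq_square sum_product
    by (simp add: sum_distrib_left mult_ac sum_swap3[of _ V V "{..<d}"])
  then show "0 \<le> bilin_form V (\<lambda>x y. ip d (p x) (p y)) c c" by (simp add: sum_nonneg)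
qed

lemma abs_ip_le_1:
  assumes "unit_vec_on d u" "unit_vec_on d v"
  shows "\<bar>ip d u v\<bar> \<le> 1"
proof -
  have uv: "ip d u u = 1" "ip d v v = 1" using assms unfolding unit_vec_on_def by auto
  have "0 \<le> (\<Sum>i<d. (u i + v i)\<^sup>2)" "0 \<le> (\<Sum>i<d. (u i - v i)\<^sup>2)" by (simp_all add: sum_nonneg)
  moreover have "(\<Sum>i<d. (u i + v i)\<^sup>2) = ip d u u + 2 * ip d u v + ip d v v"
    "(\<Sum>i<d. (u i - v i)\<^sup>2) = ip d u u - 2 * ip d u v + ip d v v"
    unfolding ip_def by (simp_all add: power2_eq_square algebra_simps sum.distrib sum_subtractf sum_distrib_left)
  ultimately show ?thesis using uv by simp
qed

lemma ip_cube_vec: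
  assumes "0 < n" "x \<subseteq> {..<n}" "y \<subseteq> {..<n}"
  shows "ip n (cube_vec n x) (cube_vec n y) = 1 - 2 * real (hamming x y) / real n"
proof -
  have fin: "finite x" "finite y" using assms finite_subset by blast+
  have "cube_vec n x i * cube_vec n y i = walsh {i} (sym_diff x y) / real n" if "i < n" for i
    using that unfolding cube_vec_def walsh_sym_diff[OF fin] walsh_singleton by simp
  then have "ip n (cube_vec n x) (cube_vec n y) = (\<Sum>i<n. 1 * walsh {i} (sym_diff x y)) / real n"
    unfolding ip_def sum_divide_distrib by simp
  also have "\<dots> = 1 - 2 * real (hamming x y) / real n"
    using sum_walsh_singletons[of "sym_diff x y" n "\<lambda>_. 1"] assms unfolding hamming_def
    by (auto simp: field_simps)
  finally show ?thesis .
qed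

lemma unit_vec_on_cube_vec: "0 < n \<Longrightarrow> x \<subseteq> {..<n} \<Longrightarrow> unit_vec_on n (cube_vec n x)"
  unfolding unit_vec_on_def using ip_cube_vec[of n x x] by (simp add: cube_vec_def hamming_def)

lemma cube_threshold:
  assumes "n + 2 \<le> 2 * k" "k < n"
  shows "- 1 / (2 * real k / (2 * real k - real n) - 1) = - ((2 * real k - real n) / real n)"
    and "2 \<le> 2 * real k / (2 * real k - real n)"
proof -
  have "0 < 2 * real k - real n" "0 < real n" using assms by auto
  then show "- 1 / (2 * real k / (2 * real k - real n) - 1) = - ((2 * real k - real n) / real n)"
    and "2 \<le> 2 * real k / (2 * real k - real n)"
    using assms by (simp_all add: field_simps)
qed

lemma vector_coloring_cube_vec:
  assumes "n + 2 \<le> 2 * k" "k < n" "E \<subseteq> H'_edges n k"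
  shows "vector_coloring (even_cube n) E (2 * real k / (2 * real k - real n)) n (cube_vec n)"
  unfolding vector_coloring_def
proof (intro conjI ballI)
  have n: "0 < n" using assms(2) by simp
  show "2 \<le> 2 * real k / (2 * real k - real n)" by (rule cube_threshold(2)[OF assms(1,2)])
  show "unit_vec_on n (cube_vec n x)" if "x \<in> even_cube n" for x
    using unit_vec_on_cube_vec[OF n even_cube_subset[OF that]] .
  fix e assume "e \<in> E"
  then obtain x y where e: "e = (x, y)" "x \<in> even_cube n" "y \<in> even_cube n" "k \<le> hamming x y"
    using assms(3) unfolding H'_edges_def by auto
  have "ip n (cube_vec n x) (cube_vec n y) \<le> 1 - 2 * real k / real n"
    unfolding ip_cube_vec[OF n even_cube_subset[OF e(2)] even_cube_subset[OF e(3)]]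
    using e(4) n by (simp add: divide_right_mono)
  also have "\<dots> = - 1 / (2 * real k / (2 * real k - real n) - 1)"
    unfolding cube_threshold(1)[OF assms(1,2)] using n by (simp add: field_simps)
  finally show "case e of (x, y) \<Rightarrow> ip n (cube_vec n x) (cube_vec n y) \<le> - 1 / (2 * real k / (2 * real k - real n) - 1)"
    using e(1) by simp
qed

lemma psd_cube_kernel_gram:
  assumes "even k" "n + 2 \<le> 2 * k" "k < n" "\<forall>x\<in>even_cube n. unit_vec_on d (p x)"
  shows "psd_cube_kernel n k (\<lambda>x y. ip d (p x) (p y))"
  using assms by unfold_locales (auto simp: ip_commute psd_on_gram unit_vec_on_def)

lemma vector_coloring_ge:
  assumes "even k" "n + 2 \<le> 2 * k" "k < n" "H_edges n k \<subseteq> E"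
    and "vector_coloring (even_cube n) E t d p"
  shows "2 * real k / (2 * real k - real n) \<le> t"
proof -
  interpret psd_cube_kernel n k "\<lambda>x y. ip d (p x) (p y)"
    using psd_cube_kernel_gram assms(1-3,5) unfolding vector_coloring_def by blast
  have "1 / (t - 1) \<le> (2 * real k - real n) / real n"
    using assms(4,5) unfolding vector_coloring_def by (intro H_edge_bound) fastforce
  moreover have "0 < t - 1" "0 < 2 * real k - real n" "0 < real n"
    using assms(2,3,5) unfolding vector_coloring_def by auto
  ultimately show ?thesis by (simp add: field_simps)
qed

lemma chi_v_eq:
  assumes "even k" "n + 2 \<le> 2 * k" "k < n" "H_edges n k \<subseteq> E" "E \<subseteq> H'_edges n k"
  shows "chi_v (even_cube n) E = 2 * real k / (2 * real k - real n)"
  unfolding chi_v_def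
proof (rule cInf_eq_minimum)
  show "2 * real k / (2 * real k - real n) \<in> {t. \<exists>d p. vector_coloring (even_cube n) E t d p}"
    using vector_coloring_cube_vec[OF assms(2,3,5)] by blast
qed (use vector_coloring_ge[OF assms(1-4)] in blast)

lemma optimal_vector_coloring_gram:
  assumes "even k" "n + 2 \<le> 2 * k" "k < n" "H_edges n k \<subseteq> E"
    and "vector_coloring (even_cube n) E (2 * real k / (2 * real k - real n)) d q"
    and "x \<in> even_cube n" "y \<in> even_cube n"
  shows "ip d (q x) (q y) = 1 - 2 * real (hamming x y) / real n"
proof -
  interpret psd_cube_kernel n k "\<lambda>x y. ip d (q x) (q y)"
    using psd_cube_kernel_gram assms(1-3,5) unfolding vector_coloring_def by blast
  show ?thesis
    using assms(4,5) cube_threshold(1)[OF assms(2,3)] unfolding vector_coloring_def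
    by (intro gram_rigidity assms(6,7)) fastforce
qed

lemma sum_centred_indicators:
  assumes "a < N" "b < N"
  shows "(\<Sum>i<N. ((if i = a then 1 else 0) - 1 / real N) * ((if i = b then 1 else 0) - 1 / real N)) =
    (if a = b then 1 else 0) - 1 / real N"
proof -
  define da db where "da i = (if i = a then 1 else (0::real))" "db i = (if i = b then 1 else (0::real))" for i
  have "(\<Sum>i<N. (da i - 1 / real N) * (db i - 1 / real N)) =
      (\<Sum>i<N. da i * db i) - (1 / real N) * (\<Sum>i<N. da i) - (1 / real N) * (\<Sum>i<N. db i)
        + real N * (1 / (real N * real N))"
    by (simp add: algebra_simps sum.distrib sum_subtractf sum_distrib_left sum_divide_distrib)
  also have "(\<Sum>i<N. da i * db i) = (if a = b then 1 else 0)"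
    using assms unfolding da_db_def by (simp add: if_distrib[of "\<lambda>x. x * _"] cong: if_cong)
  also have "(\<Sum>i<N. da i) = 1" using assms unfolding da_db_def by simp
  also have "(\<Sum>i<N. db i) = 1" using assms unfolding da_db_def by simp
  also have "real N * (1 / (real N * real N)) = 1 / real N" using assms by simp
  finally show ?thesis unfolding da_db_def by simp
qed

lemma regular_simplex_exists:
  assumes "finite V" "2 \<le> card V"
  obtains p where "\<forall>x\<in>V. unit_vec_on (card V) (p x)"
    "\<forall>x\<in>V. \<forall>y\<in>V. x \<noteq> y \<longrightarrow> ip (card V) (p x) (p y) = - 1 / (real (card V) - 1)"
proof -
  define N where "N = card V"
  obtain f where f: "bij_betw f V {0..<N}" using ex_bij_betw_finite_nat[OF assms(1)] unfolding N_def by blast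
  have N: "2 \<le> real N" using assms(2) unfolding N_def by simp
  \<comment> \<open>the centred standard basis vectors, rescaled to unit length\<close>
  define s where "s = sqrt (1 - 1 / real N)"
  define p where "p x i = (if i < N then (if i = f x then 1 else 0) - 1 / real N else 0) / s" for x i
  have s: "s * s = 1 - 1 / real N" "s * s \<noteq> 0" unfolding s_def using N by (simp_all add: field_simps)
  have ip_p: "ip N (p x) (p y) = ((if f x = f y then 1 else 0) - 1 / real N) / (s * s)"
    if "x \<in> V" "y \<in> V" for x y
  proof -
    have "ip N (p x) (p y) = (\<Sum>i<N. ((if i = f x then 1 else 0) - 1 / real N) *
        ((if i = f y then 1 else 0) - 1 / real N)) / (s * s)"
      unfolding ip_def p_def sum_divide_distrib by (intro sum.cong) auto
    moreover have "f x < N" "f y < N" using f that unfolding bij_betw_def by auto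
    ultimately show ?thesis using sum_centred_indicators by simp
  qed
  have "unit_vec_on N (p x)" if "x \<in> V" for x
    unfolding unit_vec_on_def ip_p[OF that that] using s by (simp add: p_def)
  moreover have "ip N (p x) (p y) = - 1 / (real N - 1)" if "x \<in> V" "y \<in> V" "x \<noteq> y" for x y
  proof -
    have "f x \<noteq> f y" using f that unfolding bij_betw_def inj_on_def by blast
    then show ?thesis unfolding ip_p[OF that(1,2)] s(1) using N by (simp add: field_simps)
  qed
  ultimately show ?thesis using that unfolding N_def by blast
qed

lemma bounded_convergent_subseq:
  fixes f :: "nat \<Rightarrow> 'a \<Rightarrow> real"
  assumes "finite A" "\<And>j a. a \<in> A \<Longrightarrow> \<bar>f j a\<bar> \<le> B"
  obtains r L where "strict_mono r" "\<And>a. a \<in> A \<Longrightarrow> (\<lambda>j. f (r j) a) \<longlonglongrightarrow> L a"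
proof -
  have "\<exists>r L. strict_mono r \<and> (\<forall>a\<in>A. (\<lambda>j. f (r j) a) \<longlonglongrightarrow> L a)"
    using assms
  proof (induction A rule: finite_induct)
    case empty
    show ?case using strict_mono_id by blast
  next
    case (insert a A)
    obtain r L where r: "strict_mono r" "\<forall>b\<in>A. (\<lambda>j. f (r j) b) \<longlonglongrightarrow> L b"
      using insert by blast
    obtain r' where r': "strict_mono r'" "monoseq (\<lambda>j. f (r (r' j)) a)"
      using seq_monosub[of "\<lambda>j. f (r j) a"] by blast
    have "Bseq (\<lambda>j. f (r (r' j)) a)" by (rule BseqI'[of _ B]) (use insert.prems in auto)
    then obtain l where l: "(\<lambda>j. f (r (r' j)) a) \<longlonglongrightarrow> l"
      using r'(2) Bseq_monoseq_convergent convergent_def by blast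
    have "(\<lambda>j. f (r (r' j)) b) \<longlonglongrightarrow> L b" if "b \<in> A" for b
      using LIMSEQ_subseq_LIMSEQ[OF r(2)[rule_format, OF that] r'(1)] by (simp add: comp_def)
    then have "\<forall>b\<in>insert a A. (\<lambda>j. f ((r \<circ> r') j) b) \<longlonglongrightarrow> (L(a := l)) b" using l by auto
    then show ?case using strict_mono_o[OF r(1) r'(1)] by blast
  qed
  then show ?thesis using that by blast
qed

lemma psd_cube_kernel_gram_limit:
  assumes "even k" "n + 2 \<le> 2 * k" "k < n"
    and units: "\<And>j x. x \<in> even_cube n \<Longrightarrow> unit_vec_on (D j) (P j x)"
    and lim: "\<And>x y. x \<in> even_cube n \<Longrightarrow> y \<in> even_cube n \<Longrightarrow> (\<lambda>j. ip (D j) (P j x) (P j y)) \<longlonglongrightarrow> L x y"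
  shows "psd_cube_kernel n k L"
proof
  fix x y assume xy: "x \<in> even_cube n" "y \<in> even_cube n"
  show "L x y = L y x" using lim[OF xy] lim[OF xy(2,1)] by (simp add: ip_commute LIMSEQ_unique)
next
  fix x assume x: "x \<in> even_cube n"
  have "(\<lambda>j. ip (D j) (P j x) (P j x)) = (\<lambda>j. 1)" using units[OF x] unfolding unit_vec_on_def by simp
  then show "L x x = 1" using lim[OF x x] LIMSEQ_unique[OF _ tendsto_const] by metis
next
  show "psd_on (even_cube n) L"
    unfolding psd_on_def
  proof
    fix c :: "nat set \<Rightarrow> real"
    have "(\<lambda>j. bilin_form (even_cube n) (\<lambda>x y. ip (D j) (P j x) (P j y)) c c) \<longlonglongrightarrow> bilin_form (even_cube n) L c c"
      unfolding bilin_form_def using lim by (intro tendsto_sum tendsto_mult_left) auto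
    moreover have "\<forall>j. 0 \<le> bilin_form (even_cube n) (\<lambda>x y. ip (D j) (P j x) (P j y)) c c"
      using psd_on_gram unfolding psd_on_def by blast
    ultimately show "0 \<le> bilin_form (even_cube n) L c c" by (intro LIMSEQ_le_const) auto
  qed
qed (use assms in auto)

lemma strict_vector_colorings_bounded_away:
  assumes k: "even k" "n + 2 \<le> 2 * k" "k < n"
    and E: "H_edges n k \<subset> E" "E \<subseteq> H'_edges n k"
    and strict: "\<And>j. strict_vector_coloring (even_cube n) E (T j) (D j) (P j)"
    and T: "T \<longlonglongrightarrow> 2 * real k / (2 * real k - real n)"
  shows False
proof -
  obtain x0 y0 where e0: "(x0, y0) \<in> E" "(x0, y0) \<notin> H_edges n k" using E(1) by auto
  then have e0V: "x0 \<in> even_cube n" "y0 \<in> even_cube n" "hamming x0 y0 \<noteq> k"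
    using E(2) unfolding H_edges_def H'_edges_def by auto
  have units: "unit_vec_on (D j) (P j x)" if "x \<in> even_cube n" for j x
    using strict that unfolding strict_vector_coloring_def by blast
  obtain r L where r: "strict_mono r"
    and lim: "\<And>z. z \<in> even_cube n \<times> even_cube n \<Longrightarrow>
      (\<lambda>j. ip (D (r j)) (P (r j) (fst z)) (P (r j) (snd z))) \<longlonglongrightarrow> L z"
  proof (rule bounded_convergent_subseq[of _ "\<lambda>j z. ip (D j) (P j (fst z)) (P j (snd z))" 1])
    show "finite (even_cube n \<times> even_cube n)" using finite_even_cube by simp
    show "\<bar>ip (D j) (P j (fst z)) (P j (snd z))\<bar> \<le> 1" if "z \<in> even_cube n \<times> even_cube n" for j z
      using that by (intro abs_ip_le_1 units) auto
  qed blast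
  interpret psd_cube_kernel n k "\<lambda>x y. L (x, y)"
    using lim units by (intro psd_cube_kernel_gram_limit[OF k, of "D \<circ> r" "P \<circ> r"]) auto
  have "2 * real k / (2 * real k - real n) - 1 \<noteq> 0" using cube_threshold(2)[OF k(2,3)] by linarith
  then have lim_T: "(\<lambda>j. - 1 / (T (r j) - 1)) \<longlonglongrightarrow> - 1 / (2 * real k / (2 * real k - real n) - 1)"
    using LIMSEQ_subseq_LIMSEQ[OF T r] unfolding comp_def by (intro tendsto_intros)
  have lim_E: "(\<lambda>j. - 1 / (T (r j) - 1)) \<longlonglongrightarrow> L (x, y)" if "(x, y) \<in> E" for x y
  proof -
    have "x \<in> even_cube n" "y \<in> even_cube n" using E(2) that unfolding H'_edges_def by auto
    moreover have "ip (D (r j)) (P (r j) x) (P (r j) y) = - 1 / (T (r j) - 1)" for j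
      using strict[of "r j"] that unfolding strict_vector_coloring_def by auto
    ultimately show ?thesis using lim[of "(x, y)"] by simp
  qed
  have edges: "L (x, y) = - ((2 * real k - real n) / real n)" if "(x, y) \<in> E" for x y
    using LIMSEQ_unique[OF lim_E[OF that] lim_T] cube_threshold(1)[OF k(2,3)] by simp
  have "L (x0, y0) = 1 - 2 * real (hamming x0 y0) / real n"
    by (rule gram_rigidity[OF _ e0V(1,2)]) (use E(1) edges in auto)
  then have "- ((2 * real k - real n) / real n) = 1 - 2 * real (hamming x0 y0) / real n"
    using edges[OF e0(1)] by simp
  then have "real (hamming x0 y0) = real k" using k(3) by (simp add: field_simps)
  then show False using e0V(3) by simp
qed

lemma strict_vector_coloring_exists:
  assumes "finite V" "2 \<le> card V" "\<And>x y. (x, y) \<in> E \<Longrightarrow> x \<in> V \<and> y \<in> V \<and> x \<noteq> y"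
  shows "\<exists>p. strict_vector_coloring V E (real (card V)) (card V) p"
proof -
  obtain p where "\<forall>x\<in>V. unit_vec_on (card V) (p x)"
    "\<forall>x\<in>V. \<forall>y\<in>V. x \<noteq> y \<longrightarrow> ip (card V) (p x) (p y) = - 1 / (real (card V) - 1)"
    using regular_simplex_exists[OF assms(1,2)] by blast
  then have "strict_vector_coloring V E (real (card V)) (card V) p"
    unfolding strict_vector_coloring_def using assms(2,3) by auto
  then show ?thesis by blast
qed

lemma real_Inf_as_limit:
  fixes S :: "real set"
  assumes "S \<noteq> {}" "bdd_below S"
  obtains T where "\<And>j. T j \<in> S" "T \<longlonglongrightarrow> Inf S"
proof -
  have "\<exists>t\<in>S. t < Inf S + 1 / real (Suc j)" for j
    using cInf_less_iff[OF assms, of "Inf S + 1 / real (Suc j)"] by simp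
  then obtain T where T: "\<And>j. T j \<in> S" "\<And>j. T j < Inf S + 1 / real (Suc j)" by metis
  have upper: "(\<lambda>j. Inf S + 1 / real (Suc j)) \<longlonglongrightarrow> Inf S"
    using tendsto_add[OF tendsto_const[of "Inf S"] LIMSEQ_inverse_real_of_nat] by (simp add: inverse_eq_divide)
  have "\<forall>\<^sub>F j in sequentially. Inf S \<le> T j" "\<forall>\<^sub>F j in sequentially. T j \<le> Inf S + 1 / real (Suc j)"
    using T cInf_lower[OF _ assms(2)] by (simp_all add: less_imp_le)
  then have "T \<longlonglongrightarrow> Inf S" using tendsto_sandwich[OF _ _ tendsto_const upper] by blast
  then show ?thesis using that T(1) by blast
qed

lemma chi_sv_gt:
  assumes k: "even k" "n + 2 \<le> 2 * k" "k < n"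
    and E: "H_edges n k \<subset> E" "E \<subseteq> H'_edges n k"
  shows "2 * real k / (2 * real k - real n) < chi_sv (even_cube n) E"
proof -
  define St where "St = {t. \<exists>d p. strict_vector_coloring (even_cube n) E t d p}"
  have E_edges: "x \<in> even_cube n \<and> y \<in> even_cube n \<and> x \<noteq> y" if "(x, y) \<in> E" for x y
    using E(2) that k unfolding H'_edges_def hamming_def by auto
  obtain x0 y0 where "(x0, y0) \<in> E" using E(1) by auto
  then have "{x0, y0} \<subseteq> even_cube n" "card {x0, y0} = 2" using E_edges by auto
  then have "2 \<le> card (even_cube n)" using finite_even_cube by (metis card_mono)
  then have St_ne: "St \<noteq> {}"
    using strict_vector_coloring_exists[OF finite_even_cube _ E_edges] unfolding St_def by blast
  have St_ge: "2 * real k / (2 * real k - real n) \<le> t" if t: "t \<in> St" for t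
  proof -
    obtain d p where "strict_vector_coloring (even_cube n) E t d p" using t unfolding St_def by blast
    then have "vector_coloring (even_cube n) E t d p"
      unfolding strict_vector_coloring_def vector_coloring_def by auto
    then show ?thesis using vector_coloring_ge[OF k] E(1) by blast
  qed
  then have St_bdd: "bdd_below St" by (rule bdd_belowI)
  have "Inf St \<noteq> 2 * real k / (2 * real k - real n)"
  proof
    assume Inf_eq: "Inf St = 2 * real k / (2 * real k - real n)"
    obtain T where T: "\<And>j. T j \<in> St" "T \<longlonglongrightarrow> Inf St"
      using real_Inf_as_limit[OF St_ne St_bdd] by blast
    then have "\<forall>j. \<exists>dp. strict_vector_coloring (even_cube n) E (T j) (fst dp) (snd dp)"
      unfolding St_def by auto
    then have "\<exists>DP. \<forall>j. strict_vector_coloring (even_cube n) E (T j) (fst (DP j)) (snd (DP j))"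
      by (rule choice)
    then obtain DP where "\<And>j. strict_vector_coloring (even_cube n) E (T j) (fst (DP j)) (snd (DP j))"
      by blast
    then show False using T(2) unfolding Inf_eq by (rule strict_vector_colorings_bounded_away[OF k E])
  qed
  moreover have "2 * real k / (2 * real k - real n) \<le> Inf St" using St_ne St_ge by (intro cInf_greatest)
  ultimately show ?thesis unfolding chi_sv_def St_def by simp
qed

lemma cube_vec_not_strict:
  assumes "n + 2 \<le> 2 * k" "k < n" "H_edges n k \<subset> E" "E \<subseteq> H'_edges n k"
  shows "\<not> strict_vector_coloring (even_cube n) E (2 * real k / (2 * real k - real n)) n (cube_vec n)"
proof
  assume strict: "strict_vector_coloring (even_cube n) E (2 * real k / (2 * real k - real n)) n (cube_vec n)"
  obtain x y where e: "(x, y) \<in> E" "(x, y) \<notin> H_edges n k" using assms(3) by auto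
  then have xy: "x \<in> even_cube n" "y \<in> even_cube n" "hamming x y \<noteq> k"
    using assms(4) unfolding H_edges_def H'_edges_def by auto
  have "ip n (cube_vec n x) (cube_vec n y) = - 1 / (2 * real k / (2 * real k - real n) - 1)"
    using strict e(1) unfolding strict_vector_coloring_def by blast
  then have "1 - 2 * real (hamming x y) / real n = - ((2 * real k - real n) / real n)"
    using cube_threshold(1)[OF assms(1,2)] assms(2)
      ip_cube_vec[OF _ even_cube_subset[OF xy(1)] even_cube_subset[OF xy(2)]] by simp
  then have "real (hamming x y) = real k" using assms(2) by (simp add: field_simps)
  then show False using xy(3) by simp
qed

theorem corollary3p13:
  fixes n k :: nat and E :: "(nat set \<times> nat set) set"
  assumes "n > 0" and "even k" and "real n / 2 + 1 \<le> real k" and "k \<le> n - 1"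
    and "sym E"
    and "H_edges n k \<subset> E" and "E \<subseteq> H'_edges n k"
  shows "chi_v (even_cube n) E = chi_v (even_cube n) (H_edges n k)
    \<and> uniquely_vector_colorable (even_cube n) E
    \<and> optimal_vector_coloring (even_cube n) E n (cube_vec n)
    \<and> (\<forall>d q. optimal_vector_coloring (even_cube n) E d q
           \<longrightarrow> same_gram (even_cube n) d q n (cube_vec n))
    \<and> \<not> strict_vector_coloring (even_cube n) E (chi_v (even_cube n) E) n (cube_vec n)
    \<and> chi_v (even_cube n) E < chi_sv (even_cube n) E"
proof -
  have k: "even k" "n + 2 \<le> 2 * k" "k < n" using assms(1-4) by linarith+
  have HE: "H_edges n k \<subseteq> E" using assms(6) by blast
  have chi: "chi_v (even_cube n) E = 2 * real k / (2 * real k - real n)"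
    by (rule chi_v_eq[OF k HE assms(7)])
  moreover have "chi_v (even_cube n) (H_edges n k) = 2 * real k / (2 * real k - real n)"
    by (rule chi_v_eq[OF k order.refl]) (auto simp: H_edges_def H'_edges_def)
  moreover have "ip d (q x) (q y) = ip n (cube_vec n x) (cube_vec n y)"
    if "optimal_vector_coloring (even_cube n) E d q" "x \<in> even_cube n" "y \<in> even_cube n" for d q x y
    using optimal_vector_coloring_gram[OF k HE _ that(2,3)] that(1) chi
      ip_cube_vec[OF _ even_cube_subset[OF that(2)] even_cube_subset[OF that(3)]] k(3)
    unfolding optimal_vector_coloring_def by simp
  then have "uniquely_vector_colorable (even_cube n) E"
    "\<forall>d q. optimal_vector_coloring (even_cube n) E d q \<longrightarrow> same_gram (even_cube n) d q n (cube_vec n)"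
    unfolding uniquely_vector_colorable_def same_gram_def by simp_all
  moreover have "optimal_vector_coloring (even_cube n) E n (cube_vec n)"
    unfolding optimal_vector_coloring_def chi by (rule vector_coloring_cube_vec[OF k(2,3) assms(7)])
  ultimately show ?thesis
    using cube_vec_not_strict[OF k(2,3) assms(6,7)] chi_sv_gt[OF k assms(6,7)] by simp
qed

end
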